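(* Let $\sigma>0$ and let $f=\sum_{n\in\mathbb N_0^d}a_{2n}(f)h_{2n}\in\mathcal H_{\flat_\sigma,even}(\mathbb R^d)$. Then $f|_{\mathbb R^d_+}\circ w\in\mathcal G_{\flat_\sigma}(\mathbb R^d_+)$, and $f|_{\mathbb R^d_+}\circ w=\sum_{n\in\mathbb N_0^d}b_nl_n$ with $\{b_n\}_{n\in\mathbb N_0^d}\in\ell_{\flat_\sigma}(\mathbb N_0^d)$ given by $$b_n=\frac{(-1)^{|n|}2^{|n|}}{\pi^{d/4}}\sum_{k\in\mathbb N_0^d}\binom{k-\mathbf{3/2}}{k}\frac{(-1)^{|k|}2^{|k|}(k+n)!\,a_{2(k+n)}(f)}{\sqrt{(2(k+n))!}},\quad n\in\mathbb N_0^d.$$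
   Context: $\mathbb R^d_+=(0,\infty)^d$; $w(x)=(\sqrt{x_1},\dots,\sqrt{x_d})$ for $x\in[0,\infty)^d$. Multi-indices: $|n|=\sum n_j$, $n!=\prod n_j!$, $2n=(2n_1,\dots,2n_d)$, $\mathbf{3/2}=(3/2,\dots,3/2)$, $\binom{\gamma}{m}=\prod_j\frac{\gamma_j(\gamma_j-1)\cdots(\gamma_j-m_j+1)}{m_j!}$. Laguerre functions $l_n(x)=\prod_jL_{n_j}(x_j)e^{-x_j/2}$ with $L_m(t)=\frac{e^t}{m!}\frac{d^m}{dt^m}(e^{-t}t^m)$; Hermite functions $h_n(x)=\prod_j(2^{n_j}n_j!\sqrt\pi)^{-1/2}e^{-x_j^2/2}H_{n_j}(x_j)$, $H_m(t)=(-1)^me^{t^2}\frac{d^m}{dt^m}e^{-t^2}$; Hermite coefficients $a_n(f)=\int_{\mathbb R^d}fh_n$. For $\tau>0$, $\ell_{\flat_\tau}(\mathbb N_0^d)$ is the set of complex sequences $\{a_n\}$ with $\sup_n|a_n|h^{|n|}n!^{1/(2\tau)}<\infty$ for some $h>0$. $\mathcal H_{\flat_\sigma}(\mathbb R^d)$ is the space of $\sum_na_nh_n$ with $\{a_n\}\in\ell_{\flat_\sigma}(\mathbb N_0^d)$, and $\mathcal H_{\flat_\sigma,even}(\mathbb R^d)$ its subspace of functions invariant under changing the sign of any single coordinate. $\mathcal G_{\flat_\sigma}(\mathbb R^d_+)$ is the space of functions $\sum_na_nl_n$ (absolutely convergent series) with $\{a_n\}\in\ell_{\flat_{\sigma/2}}(\mathbb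 N_0^d)$. *)

theory Defs
  imports "HOL-Analysis.Analysis"
begin

text \<open>Dimension d is encoded by a finite index type 'd (d = CARD('d)); points of R^d are
  real^'d, multi-indices in N_0^d are functions 'd => nat.\<close>

definition mabs :: "('d::finite \<Rightarrow> nat) \<Rightarrow> nat" where
  "mabs n = (\<Sum>j\<in>UNIV. n j)"

definition mfact :: "('d::finite \<Rightarrow> nat) \<Rightarrow> real" where
  "mfact n = (\<Prod>j\<in>UNIV. fact (n j))"

definition mbinom :: "('d::finite \<Rightarrow> real) \<Rightarrow> ('d \<Rightarrow> nat) \<Rightarrow> real" where
  "mbinom g m = (\<Prod>j\<in>UNIV. g j gchoose m j)"

definition laguerre_poly :: "nat \<Rightarrow> real \<Rightarrow> real" where
  "laguerre_poly m t = exp t / fact m * (deriv ^^ m) (\<lambda>s. exp (- s) * s ^ m) t"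

definition hermite_poly :: "nat \<Rightarrow> real \<Rightarrow> real" where
  "hermite_poly m t = (-1) ^ m * exp (t\<^sup>2) * (deriv ^^ m) (\<lambda>s. exp (- (s\<^sup>2))) t"

definition laguerre_fun :: "('d::finite \<Rightarrow> nat) \<Rightarrow> real ^ 'd \<Rightarrow> real" where
  "laguerre_fun n x = (\<Prod>j\<in>UNIV. laguerre_poly (n j) (x $ j) * exp (- (x $ j) / 2))"

definition hermite_fun :: "('d::finite \<Rightarrow> nat) \<Rightarrow> real ^ 'd \<Rightarrow> real" where
  "hermite_fun n x = (\<Prod>j\<in>UNIV. inverse (sqrt (2 ^ n j * fact (n j) * sqrt pi))
        * exp (- ((x $ j)\<^sup>2) / 2) * hermite_poly (n j) (x $ j))"

definition hermite_coeff :: "(real ^ 'd \<Rightarrow> complex) \<Rightarrow> ('d::finite \<Rightarrow> nat) \<Rightarrow> complex" where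
  "hermite_coeff f n = integral\<^sup>L lborel (\<lambda>x. f x * complex_of_real (hermite_fun n x))"

definition pos_orthant :: "(real ^ 'd) set" where
  "pos_orthant = {x. \<forall>j. 0 < x $ j}"

definition wmap :: "real ^ 'd \<Rightarrow> real ^ 'd" where
  "wmap x = (\<chi> j. sqrt (x $ j))"

definition ell_flat :: "real \<Rightarrow> (('d::finite \<Rightarrow> nat) \<Rightarrow> complex) set" where
  "ell_flat \<tau> = {a. \<exists>h>0. \<exists>C. \<forall>n. norm (a n) * h ^ mabs n * mfact n powr (1 / (2 * \<tau>)) \<le> C}"

definition H_flat :: "real \<Rightarrow> (real ^ 'd::finite \<Rightarrow> complex) set" where
  "H_flat \<sigma> = {f. \<exists>a\<in>ell_flat \<sigma>. \<forall>x.
      (\<lambda>n. norm (a n * complex_of_real (hermite_fun n x))) summable_on UNIV \<and>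
      ((\<lambda>n. a n * complex_of_real (hermite_fun n x)) has_sum f x) UNIV}"

definition H_flat_even :: "real \<Rightarrow> (real ^ 'd::finite \<Rightarrow> complex) set" where
  "H_flat_even \<sigma> = {f \<in> H_flat \<sigma>. \<forall>j x. f (\<chi> i. if i = j then - (x $ i) else x $ i) = f x}"

text \<open>G_{flat_sigma}(R^d_+): functions on the open positive orthant equal to an absolutely
  convergent series sum_n a_n l_n with a in l_{flat_{sigma/2}} (values off R^d_+ irrelevant).\<close>
definition G_flat :: "real \<Rightarrow> (real ^ 'd::finite \<Rightarrow> complex) set" where
  "G_flat \<sigma> = {g. \<exists>a\<in>ell_flat (\<sigma> / 2). \<forall>x\<in>pos_orthant.
      (\<lambda>n. norm (a n * complex_of_real (laguerre_fun n x))) summable_on UNIV \<and>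
      ((\<lambda>n. a n * complex_of_real (laguerre_fun n x)) has_sum g x) UNIV}"

end

(*
  In one variable, comparing coefficients of the explicit Hermite and Laguerre polynomials gives
  H_2m(sqrt t) = (-4)^m m! * sum_{q<=m} binom(m-q-3/2, m-q) L_q(t), so h_2m(sqrt t) is a finite
  combination of the Laguerre functions l_q(t), q <= m; in d variables the same holds for
  products.  Since f is even in each variable and the Hermite functions are orthonormal, the
  Hermite expansion of f o w only involves the coefficients a_2n(f).  Replacing each h_2n(w x)
  by its Laguerre expansion produces a double series which the decay of a_2n(f) makes
  absolutely summable; regrouping it by Laguerre index yields the coefficients b_n, and the same
  estimate gives the decay b in l_flat(sigma/2).
*)
theory Submission
  imports Defs "HOL-Computational_Algebra.Polynomial" "HOL-Probability.Distributions"
begin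

section \<open>Hermite polynomials\<close>

primrec hermite_pol :: "nat \<Rightarrow> real poly" where
  "hermite_pol 0 = 1"
| "hermite_pol (Suc n) = [:0, 2:] * hermite_pol n - pderiv (hermite_pol n)"

lemma higher_deriv_gaussian:
  "(deriv ^^ n) (\<lambda>s. exp (- (s\<^sup>2))) = (\<lambda>s. (-1) ^ n * exp (- (s\<^sup>2)) * poly (hermite_pol n) s)"
proof (induction n)
  case (Suc n)
  show ?case
  proof
    fix s :: real
    have "((\<lambda>s. (-1) ^ n * exp (- (s\<^sup>2)) * poly (hermite_pol n) s) has_real_derivative
        (-1) ^ Suc n * exp (- (s\<^sup>2)) * poly (hermite_pol (Suc n)) s) (at s)"
      by (auto intro!: derivative_eq_intros simp: power2_eq_square algebra_simps)
    then show "(deriv ^^ Suc n) (\<lambda>s. exp (- (s\<^sup>2))) s =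
        (-1) ^ Suc n * exp (- (s\<^sup>2)) * poly (hermite_pol (Suc n)) s"
      using Suc.IH by (simp add: DERIV_imp_deriv)
  qed
qed simp

lemma hermite_poly_eq_poly: "hermite_poly n t = poly (hermite_pol n) t"
proof -
  have "hermite_poly n t = ((-1) ^ n * (-1) ^ n) * (exp (t\<^sup>2) * exp (- (t\<^sup>2))) * poly (hermite_pol n) t"
    unfolding hermite_poly_def higher_deriv_gaussian by (simp add: algebra_simps)
  then show ?thesis
    by (simp flip: power_add exp_add)
qed

declare hermite_pol.simps(2) [simp del]

lemma coeff_hermite_pol_Suc:
  "coeff (hermite_pol (Suc n)) j =
     (if j = 0 then 0 else 2 * coeff (hermite_pol n) (j - 1)) - real (Suc j) * coeff (hermite_pol n) (Suc j)"
  by (cases j) (simp_all add: hermite_pol.simps(2) coeff_pderiv)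

lemma coeff_hermite_pol_eq_0: "n < j \<or> odd (n + j) \<Longrightarrow> coeff (hermite_pol n) j = 0"
proof (induction n arbitrary: j)
  case 0
  then show ?case by (cases j) auto
next
  case (Suc n)
  then show ?case
    by (cases j) (auto simp: coeff_hermite_pol_Suc)
qed

lemma degree_hermite_pol: "degree (hermite_pol n) \<le> n"
  by (rule degree_le) (auto intro: coeff_hermite_pol_eq_0)

lemma coeff_hermite_pol:
  "coeff (hermite_pol (j + 2 * a)) j = (-1) ^ a * fact (j + 2 * a) * 2 ^ j / (fact a * fact j)"
proof (induction "j + 2 * a" arbitrary: j a)
  case 0
  then show ?case by simp
next
  case (Suc n)
  note IH = Suc.hyps(1) and n = Suc.hyps(2)
  consider "j = 0" "a = 0" | i where "j = Suc i" "a = 0" | b where "j = 0" "a = Suc b"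
    | i b where "j = Suc i" "a = Suc b"
    by (cases j; cases a) auto
  then show ?case
  proof cases
    case 1
    with n show ?thesis by simp
  next
    case 2
    with n have "coeff (hermite_pol (j + 2 * a)) j = 2 * coeff (hermite_pol (i + 2 * 0)) i"
      by (simp add: coeff_hermite_pol_Suc coeff_hermite_pol_eq_0)
    also have "\<dots> = 2 * (fact i * 2 ^ i / fact i)"
      using 2 n IH[of i 0] by simp
    finally show ?thesis
      using 2 by simp
  next
    case 3
    with n have "coeff (hermite_pol (j + 2 * a)) j = - coeff (hermite_pol (1 + 2 * b)) 1"
      by (simp add: coeff_hermite_pol_Suc)
    also have "\<dots> = - ((-1) ^ b * fact (1 + 2 * b) * 2 / fact b)"
      using 3 n IH[of 1 b] by simp
    also have "\<dots> = (-1) ^ a * fact (j + 2 * a) * 2 ^ j / (fact a * fact j)"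
      using 3 by (simp add: field_simps del: of_nat_Suc) simp
    finally show ?thesis .
  next
    case 4
    with n have "coeff (hermite_pol (j + 2 * a)) j =
        2 * coeff (hermite_pol (i + 2 * a)) i - real (Suc j) * coeff (hermite_pol (Suc j + 2 * b)) (Suc j)"
      by (simp add: coeff_hermite_pol_Suc)
    also have "\<dots> = 2 * ((-1) ^ a * fact (i + 2 * a) * 2 ^ i / (fact a * fact i))
        - real (Suc j) * ((-1) ^ b * fact (Suc j + 2 * b) * 2 ^ Suc j / (fact b * fact (Suc j)))"
      using 4 n IH[of i a] IH[of "Suc j" b] by simp
    also have "\<dots> = (-1) ^ a * fact (j + 2 * a) * 2 ^ j / (fact a * fact j)"
      using 4 by (simp add: field_simps del: of_nat_Suc) (simp add: algebra_simps)
    finally show ?thesis .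
  qed
qed

lemma pderiv_hermite_pol: "pderiv (hermite_pol (Suc n)) = smult (2 * real (Suc n)) (hermite_pol n)"
proof (induction n)
  case 0
  then show ?case by (simp add: hermite_pol.simps(2) pderiv_pCons)
next
  case (Suc n)
  have "pderiv (hermite_pol (Suc (Suc n))) =
      smult 2 (hermite_pol (Suc n)) + [:0, 2:] * pderiv (hermite_pol (Suc n))
      - pderiv (pderiv (hermite_pol (Suc n)))"
    by (simp add: hermite_pol.simps(2)[of "Suc n"] pderiv_diff pderiv_mult pderiv_pCons pderiv_smult)
  also have "\<dots> = smult 2 (hermite_pol (Suc n))
      + smult (2 * real (Suc n)) ([:0, 2:] * hermite_pol n - pderiv (hermite_pol n))"
    by (simp add: Suc pderiv_smult smult_diff_right)
  also have "\<dots> = smult (2 * real (Suc (Suc n))) (hermite_pol (Suc n))"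
    by (simp add: hermite_pol.simps(2)[of n] smult_add_left[symmetric] algebra_simps)
  finally show ?case .
qed

lemma poly_eq_sum_coeff:
  fixes p :: "'a::comm_semiring_1 poly"
  assumes "degree p \<le> n"
  shows "poly p x = (\<Sum>i\<le>n. coeff p i * x ^ i)"
proof -
  have "poly p x = poly (\<Sum>i\<le>n. monom (coeff p i) i) x"
    by (simp only: poly_as_sum_of_monoms'[OF assms])
  also have "\<dots> = (\<Sum>i\<le>n. coeff p i * x ^ i)"
    by (simp add: poly_sum poly_monom)
  finally show ?thesis .
qed

lemma hermite_poly_minus: "hermite_poly n (- t) = (-1) ^ n * hermite_poly n t"
proof -
  have monomial_parity: "coeff (hermite_pol n) j * (- t) ^ j = (-1) ^ n * (coeff (hermite_pol n) j * t ^ j)" for j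
  proof (cases "odd (n + j)")
    case False
    then have "(-1::real) ^ j = (-1) ^ n"
      by (metis even_add neg_one_even_power neg_one_odd_power)
    then show ?thesis
      by (simp add: power_minus[of t])
  qed (simp add: coeff_hermite_pol_eq_0)
  show ?thesis
    by (simp add: hermite_poly_eq_poly poly_eq_sum_coeff[OF degree_hermite_pol] sum_distrib_left monomial_parity)
qed

lemma hermite_poly_even_sqrt:
  assumes "t \<ge> 0"
  shows "hermite_poly (2 * m) (sqrt t) = (\<Sum>i\<le>m. coeff (hermite_pol (2 * m)) (2 * i) * t ^ i)"
proof -
  let ?c = "coeff (hermite_pol (2 * m))"
  have "hermite_poly (2 * m) (sqrt t) = (\<Sum>j\<le>2 * m. ?c j * sqrt t ^ j)"
    by (simp add: hermite_poly_eq_poly poly_eq_sum_coeff[OF degree_hermite_pol])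
  also have "\<dots> = (\<Sum>j\<in>(\<lambda>i. 2 * i) ` {..m}. ?c j * sqrt t ^ j)"
  proof (intro sum.mono_neutral_right ballI)
    show "?c j * sqrt t ^ j = 0" if j: "j \<in> {..2 * m} - (\<lambda>i. 2 * i) ` {..m}" for j
    proof -
      have "odd j"
      proof
        assume "even j"
        then obtain i where "j = 2 * i" ..
        with j show False by auto
      qed
      then show ?thesis by (simp add: coeff_hermite_pol_eq_0)
    qed
  qed auto
  also have "\<dots> = (\<Sum>i\<le>m. ?c (2 * i) * t ^ i)"
    using assms by (simp add: sum.reindex inj_on_def power_mult)
  finally show ?thesis .
qed

section \<open>Laguerre polynomials and even Hermite polynomials\<close>

lemma higher_deriv_exp_neg_mult_poly:
  fixes p :: "real poly"
  shows
  "(deriv ^^ k) (\<lambda>s. exp (- s) * poly p s) = (\<lambda>s. exp (- s) * poly (((\<lambda>q. pderiv q - q) ^^ k) p) s)"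
proof (induction k)
  case (Suc k)
  show ?case
  proof
    fix s :: real
    have "((\<lambda>s. exp (- s) * poly (((\<lambda>q. pderiv q - q) ^^ k) p) s) has_real_derivative
        exp (- s) * poly (((\<lambda>q. pderiv q - q) ^^ Suc k) p) s) (at s)"
      by (auto intro!: derivative_eq_intros simp: algebra_simps)
    then show "(deriv ^^ Suc k) (\<lambda>s. exp (- s) * poly p s) s =
        exp (- s) * poly (((\<lambda>q. pderiv q - q) ^^ Suc k) p) s"
      using Suc.IH by (simp add: DERIV_imp_deriv)
  qed
qed simp

lemma coeff_pderiv_minus_id_power_monom:
  "coeff (((\<lambda>q. pderiv q - q) ^^ k) (monom 1 m)) j =
     (if j \<le> m then (-1) ^ (k + m + j) * real (k choose (m - j)) * fact m / fact j else 0)"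
proof (induction k arbitrary: j)
  case 0
  then show ?case by (auto simp: coeff_monom)
next
  case (Suc k)
  have rec: "coeff (((\<lambda>q. pderiv q - q) ^^ Suc k) (monom 1 m)) j =
      real (Suc j) * coeff (((\<lambda>q. pderiv q - q) ^^ k) (monom 1 m)) (Suc j)
      - coeff (((\<lambda>q. pderiv q - q) ^^ k) (monom 1 m)) j"
    by (simp add: coeff_pderiv)
  show ?case
  proof (cases "j < m")
    case True
    then obtain r where r: "m - j = Suc r" "m - Suc j = r"
      by (metis Suc_diff_Suc)
    with True show ?thesis
      unfolding rec Suc.IH by (simp add: field_simps del: of_nat_Suc)
  qed (unfold rec Suc.IH, simp)
qed

lemma laguerre_poly_altdef:
  "laguerre_poly n t = (\<Sum>i\<le>n. (-1) ^ i * real (n choose i) / fact i * t ^ i)"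
proof -
  let ?p = "((\<lambda>q. pderiv q - q) ^^ n) (monom 1 n) :: real poly"
  have deg: "degree ?p \<le> n"
    by (rule degree_le) (simp add: coeff_pderiv_minus_id_power_monom)
  have "laguerre_poly n t = exp t / fact n * (exp (- t) * poly ?p t)"
    unfolding laguerre_poly_def
    using higher_deriv_exp_neg_mult_poly[of n "monom 1 n"] by (simp add: poly_monom)
  also have "\<dots> = (\<Sum>i\<le>n. coeff ?p i * t ^ i) / fact n"
    by (simp add: poly_eq_sum_coeff[OF deg] exp_minus field_simps)
  also have "\<dots> = (\<Sum>i\<le>n. (-1) ^ i * real (n choose i) / fact i * t ^ i)"
    unfolding sum_divide_distrib
  proof (intro sum.cong refl)
    fix i assume i: "i \<in> {..n}"
    then have "(-1::real) ^ (n + n + i) = (-1) ^ i"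
      by (simp add: power_add flip: power_mult_distrib)
    with i show "coeff ?p i * t ^ i / fact n = (-1) ^ i * real (n choose i) / fact i * t ^ i"
      by (simp add: coeff_pderiv_minus_id_power_monom binomial_symmetric[symmetric])
  qed
  finally show ?thesis .
qed

definition beta_coeff :: "nat \<Rightarrow> real" where
  "beta_coeff r = (real r - 3 / 2) gchoose r"

lemma sum_beta_coeff_choose:
  assumes "i \<le> m"
  shows "(\<Sum>q\<le>m. beta_coeff (m - q) * real (q choose i)) = (real m - 1 / 2) gchoose (m - i)"
  using assms
proof (induction m arbitrary: i)
  case 0
  then show ?case by (simp add: beta_coeff_def)
next
  case (Suc m)
  have pascal: "(\<Sum>q\<le>Suc m. beta_coeff (Suc m - q) * real (q choose Suc i)) =
      (\<Sum>q\<le>m. beta_coeff (m - q) * real (q choose i)) + (\<Sum>q\<le>m. beta_coeff (m - q) * real (q choose Suc i))"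
    for i
    by (subst sum.atMost_Suc_shift) (simp add: algebra_simps sum.distrib)
  show ?case
  proof (cases i)
    case 0
    have "(\<Sum>q\<le>Suc m. beta_coeff (Suc m - q) * real (q choose i)) = (\<Sum>r\<le>Suc m. (- 3 / 2 + real r) gchoose r)"
      using 0 unfolding beta_coeff_def
      by (intro sum.reindex_bij_witness[of _ "\<lambda>r. Suc m - r" "\<lambda>r. Suc m - r"]) auto
    also have "\<dots> = (- 3 / 2 + real (Suc m) + 1) gchoose (Suc m)"
      by (rule gbinomial_parallel_sum)
    also have "\<dots> = (real (Suc m) - 1 / 2) gchoose (Suc m - i)"
      using 0 by (simp add: algebra_simps)
    finally show ?thesis .
  next
    case (Suc i')
    then have split: "(\<Sum>q\<le>Suc m. beta_coeff (Suc m - q) * real (q choose i)) =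
        (\<Sum>q\<le>m. beta_coeff (m - q) * real (q choose i')) + (\<Sum>q\<le>m. beta_coeff (m - q) * real (q choose Suc i'))"
      by (simp only: pascal)
    show ?thesis
    proof (cases "i' = m")
      case True
      have "(\<Sum>q\<le>m. beta_coeff (m - q) * real (q choose Suc m)) = 0"
        by (intro sum.neutral) auto
      with Suc True show ?thesis
        unfolding split by (simp add: Suc.IH)
    next
      case False
      with Suc.prems Suc obtain k where k: "m - i' = Suc k" "m - Suc i' = k"
        by (metis Suc_diff_Suc Suc_le_lessD le_neq_implies_less not_less_eq_eq)
      with Suc Suc.prems False have "(\<Sum>q\<le>Suc m. beta_coeff (Suc m - q) * real (q choose i)) =
          ((real m - 1 / 2) gchoose Suc k) + ((real m - 1 / 2) gchoose k)"
        unfolding split by (simp add: Suc.IH)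
      also have "\<dots> = (real (Suc m) - 1 / 2) gchoose (Suc m - i)"
        using Suc k gbinomial_Suc_Suc[of "real m - 1 / 2" k] by (simp add: algebra_simps)
      finally show ?thesis .
    qed
  qed
qed

lemma coeff_hermite_pol_even:
  assumes "i \<le> m"
  shows "coeff (hermite_pol (2 * m)) (2 * i) =
    (-4) ^ m * fact m * ((-1) ^ i / fact i * ((real m - 1 / 2) gchoose (m - i)))"
proof -
  obtain r where m: "m = i + r"
    using assms le_Suc_ex by blast
  define P where "P = pochhammer (1 / 2 :: real)"
  have P_pos: "P n > 0" for n
    unfolding P_def by (rule pochhammer_pos) simp
  have four_power: "(4::real) ^ n = (2 ^ n)\<^sup>2" for n
    by (simp add: power2_eq_square flip: power_mult_distrib)
  have "coeff (hermite_pol (2 * m)) (2 * i) = (-1) ^ r * fact (2 * m) * 4 ^ i / (fact r * fact (2 * i))"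
    using coeff_hermite_pol[of "2 * i" r] by (simp add: m distrib_left power_mult)
  also have "\<dots> = (-1) ^ r * 4 ^ m * P (i + r) * fact m / (fact r * P i * fact i)"
    using P_pos[of i] unfolding m P_def fact_double[of "i + r"] fact_double[of i]
    by (simp add: power_mult power_add four_power field_simps)
  also have "\<dots> = (-4) ^ m * fact m * ((-1) ^ i / fact i * (pochhammer (real i + 1 / 2) r / fact r))"
    using P_pos[of i] unfolding m P_def pochhammer_product'
    by (simp add: power_add power_minus[of 4] field_simps)
  also have "pochhammer (real i + 1 / 2) r / fact r = (real m - 1 / 2) gchoose (m - i)"
    unfolding m gbinomial_pochhammer' by (simp add: algebra_simps)
  finally show ?thesis .
qed

lemma hermite_poly_even_sqrt_laguerre:
  assumes "t \<ge> 0"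
  shows "hermite_poly (2 * m) (sqrt t) = (-4) ^ m * fact m * (\<Sum>q\<le>m. beta_coeff (m - q) * laguerre_poly q t)"
proof -
  have "(\<Sum>q\<le>m. beta_coeff (m - q) * laguerre_poly q t) =
      (\<Sum>q\<le>m. \<Sum>i\<le>m. beta_coeff (m - q) * ((-1) ^ i * real (q choose i) / fact i * t ^ i))"
  proof (intro sum.cong refl)
    fix q assume "q \<in> {..m}"
    then have "laguerre_poly q t = (\<Sum>i\<le>m. (-1) ^ i * real (q choose i) / fact i * t ^ i)"
      unfolding laguerre_poly_altdef by (intro sum.mono_neutral_left) auto
    then show "beta_coeff (m - q) * laguerre_poly q t =
        (\<Sum>i\<le>m. beta_coeff (m - q) * ((-1) ^ i * real (q choose i) / fact i * t ^ i))"
      by (simp add: sum_distrib_left)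
  qed
  also have "\<dots> = (\<Sum>i\<le>m. ((-1) ^ i / fact i * (\<Sum>q\<le>m. beta_coeff (m - q) * real (q choose i))) * t ^ i)"
    by (subst sum.swap) (simp add: sum_distrib_left sum_distrib_right algebra_simps)
  finally have "(-4) ^ m * fact m * (\<Sum>q\<le>m. beta_coeff (m - q) * laguerre_poly q t) =
      (\<Sum>i\<le>m. ((-4) ^ m * fact m * ((-1) ^ i / fact i * (\<Sum>q\<le>m. beta_coeff (m - q) * real (q choose i)))) * t ^ i)"
    by (simp add: sum_distrib_left algebra_simps)
  also have "\<dots> = (\<Sum>i\<le>m. coeff (hermite_pol (2 * m)) (2 * i) * t ^ i)"
    by (intro sum.cong) (simp_all add: coeff_hermite_pol_even sum_beta_coeff_choose)
  finally show ?thesis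
    using hermite_poly_even_sqrt[OF assms] by simp
qed

section \<open>Orthonormality of the Hermite functions\<close>

definition gauss_moment :: "nat \<Rightarrow> real" where
  "gauss_moment j = (if even j then sqrt pi * fact j / (2 ^ j * fact (j div 2)) else 0)"

lemma has_bochner_integral_gauss_moment:
  "has_bochner_integral lborel (\<lambda>x. exp (- (x\<^sup>2)) * x ^ j) (gauss_moment j)"
proof (cases "even j")
  case True
  then obtain k where k: "j = 2 * k" ..
  show ?thesis
    using has_bochner_integral_even_function[OF gaussian_moment_even_pos[of k]] k
    by (simp add: gauss_moment_def)
next
  case False
  then obtain k where k: "j = 2 * k + 1" by (rule oddE)
  have "has_bochner_integral lborel (\<lambda>x::real. exp (- x\<^sup>2) * x ^ (2 * k + 1)) 0"
    using gaussian_moment_odd_pos by (rule has_bochner_integral_odd_function) simp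
  then show ?thesis
    using k by (simp add: gauss_moment_def)
qed

lemma gauss_moment_Suc_Suc: "real (Suc j) * gauss_moment j = 2 * gauss_moment (Suc (Suc j))"
proof (cases "even j")
  case True
  then obtain k where k: "j = 2 * k" ..
  then show ?thesis
    by (simp add: gauss_moment_def field_simps del: of_nat_Suc) (simp add: algebra_simps)
qed (simp add: gauss_moment_def)

definition gauss_integral :: "real poly \<Rightarrow> real" where
  "gauss_integral p = (\<integral>x. poly p x * exp (- (x\<^sup>2)) \<partial>lborel)"

lemma has_bochner_integral_gauss_poly:
  fixes p :: "real poly"
  assumes "degree p \<le> n"
  shows "has_bochner_integral lborel (\<lambda>x. poly p x * exp (- (x\<^sup>2))) (\<Sum>j\<le>n. coeff p j * gauss_moment j)"
proof -
  have "(\<lambda>x. poly p x * exp (- (x\<^sup>2))) = (\<lambda>x. \<Sum>j\<le>n. coeff p j * (exp (- (x\<^sup>2)) * x ^ j))"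
    by (simp add: poly_eq_sum_coeff[OF assms] sum_distrib_left sum_distrib_right mult_ac)
  then show ?thesis
    by (simp add: has_bochner_integral_sum has_bochner_integral_mult_right has_bochner_integral_gauss_moment)
qed

lemma integrable_gauss_poly:
  fixes p :: "real poly"
  shows "integrable lborel (\<lambda>x. poly p x * exp (- (x\<^sup>2)))"
  using has_bochner_integral_gauss_poly[OF order_refl, of p] by (simp add: has_bochner_integral_iff)

lemma gauss_integral_eq_sum:
  "degree p \<le> n \<Longrightarrow> gauss_integral p = (\<Sum>j\<le>n. coeff p j * gauss_moment j)"
  unfolding gauss_integral_def by (rule has_bochner_integral_integral_eq[OF has_bochner_integral_gauss_poly])

lemma gauss_integral_add: "gauss_integral (p + q) = gauss_integral p + gauss_integral q"
  unfolding gauss_integral_def by (simp add: distrib_right integrable_gauss_poly)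

lemma gauss_integral_diff: "gauss_integral (p - q) = gauss_integral p - gauss_integral q"
  unfolding gauss_integral_def by (simp add: left_diff_distrib integrable_gauss_poly)

lemma gauss_integral_smult: "gauss_integral (smult c p) = c * gauss_integral p"
  unfolding gauss_integral_def by (simp add: mult.assoc)

text \<open>Integration by parts against \<open>exp (- x\<^sup>2)\<close>, checked on the moments.\<close>
lemma gauss_integral_pderiv: "gauss_integral (pderiv p) = gauss_integral ([:0, 2:] * p)"
proof -
  define n where "n = degree p"
  have "degree (pderiv p) \<le> n"
    by (simp add: n_def degree_pderiv)
  then have "gauss_integral (pderiv p) = (\<Sum>j\<le>n. coeff p (Suc j) * (real (Suc j) * gauss_moment j))"
    by (simp add: gauss_integral_eq_sum coeff_pderiv mult_ac)
  also have "\<dots> = (\<Sum>j\<le>n. 2 * coeff p (Suc j) * gauss_moment (Suc (Suc j)))"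
    by (simp only: gauss_moment_Suc_Suc mult.left_commute mult.assoc)
  also have "\<dots> = (\<Sum>i\<le>Suc n. 2 * coeff p i * gauss_moment (Suc i))"
    by (subst sum.atMost_Suc_shift) (simp add: gauss_moment_def)
  also have "\<dots> = (\<Sum>j\<le>Suc (Suc n). coeff ([:0, 2:] * p) j * gauss_moment j)"
    by (subst sum.atMost_Suc_shift) (simp add: mult_pCons_left)
  also have "\<dots> = gauss_integral ([:0, 2:] * p)"
    by (rule gauss_integral_eq_sum[symmetric]) (simp add: n_def degree_mult_le order.trans[OF degree_mult_le])
  finally show ?thesis .
qed

lemma gauss_integral_hermite_pol_mult_Suc:
  "gauss_integral (hermite_pol m * hermite_pol (Suc n)) = gauss_integral (pderiv (hermite_pol m) * hermite_pol n)"
proof -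
  have "hermite_pol m * hermite_pol (Suc n) =
      [:0, 2:] * (hermite_pol m * hermite_pol n) - hermite_pol m * pderiv (hermite_pol n)"
    by (simp add: hermite_pol.simps(2) algebra_simps)
  then have "gauss_integral (hermite_pol m * hermite_pol (Suc n)) =
      gauss_integral (pderiv (hermite_pol m * hermite_pol n)) - gauss_integral (hermite_pol m * pderiv (hermite_pol n))"
    by (simp only: gauss_integral_diff gauss_integral_pderiv)
  then show ?thesis
    by (simp add: pderiv_mult gauss_integral_add ac_simps)
qed

lemma gauss_integral_hermite_pol_mult:
  "gauss_integral (hermite_pol m * hermite_pol n) = (if m = n then 2 ^ n * fact n * sqrt pi else 0)"
proof (induction n arbitrary: m)
  case 0
  show ?case
  proof (cases m)
    case 0
    then show ?thesis
      using gauss_integral_eq_sum[of 1 0] by (simp add: gauss_moment_def)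
  next
    case (Suc m')
    then show ?thesis
      using gauss_integral_hermite_pol_mult_Suc[of 0 m'] by (simp add: mult.commute gauss_integral_def)
  qed
next
  case (Suc n)
  show ?case
  proof (cases m)
    case 0
    then show ?thesis
      using gauss_integral_hermite_pol_mult_Suc[of 0 n] by (simp add: gauss_integral_def)
  next
    case (Suc m')
    then show ?thesis
      by (simp add: gauss_integral_hermite_pol_mult_Suc pderiv_hermite_pol gauss_integral_smult Suc.IH)
  qed
qed

definition hermite_fun1 :: "nat \<Rightarrow> real \<Rightarrow> real" where
  "hermite_fun1 n t = inverse (sqrt (2 ^ n * fact n * sqrt pi)) * exp (- (t\<^sup>2) / 2) * hermite_poly n t"

definition laguerre_fun1 :: "nat \<Rightarrow> real \<Rightarrow> real" where
  "laguerre_fun1 n t = laguerre_poly n t * exp (- t / 2)"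

lemma hermite_fun1_mult:
  "hermite_fun1 m t * hermite_fun1 n t =
     inverse (sqrt (2 ^ m * fact m * sqrt pi)) * inverse (sqrt (2 ^ n * fact n * sqrt pi))
     * (poly (hermite_pol m * hermite_pol n) t * exp (- (t\<^sup>2)))"
proof -
  have "exp (- (t\<^sup>2) / 2) * exp (- (t\<^sup>2) / 2) = exp (- (t\<^sup>2))"
    by (simp flip: exp_add)
  then show ?thesis
    unfolding hermite_fun1_def hermite_poly_eq_poly by (simp add: algebra_simps)
qed

lemma integrable_hermite_fun1_mult: "integrable lborel (\<lambda>t. hermite_fun1 m t * hermite_fun1 n t)"
  unfolding hermite_fun1_mult by (intro integrable_mult_right integrable_gauss_poly)

lemma integral_hermite_fun1_mult:
  "(\<integral>t. hermite_fun1 m t * hermite_fun1 n t \<partial>lborel) = (if m = n then 1 else 0)"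
proof -
  have "(\<integral>t. hermite_fun1 m t * hermite_fun1 n t \<partial>lborel) =
      inverse (sqrt (2 ^ m * fact m * sqrt pi)) * inverse (sqrt (2 ^ n * fact n * sqrt pi))
      * gauss_integral (hermite_pol m * hermite_pol n)"
    unfolding hermite_fun1_mult gauss_integral_def by simp
  moreover have "inverse (sqrt c) * inverse (sqrt c) * c = 1" if "c > 0" for c :: real
    using that by (simp flip: inverse_mult_distrib)
  ultimately show ?thesis
    by (simp add: gauss_integral_hermite_pol_mult)
qed

lemma integral_abs_hermite_fun1_mult_le:
  "(\<integral>t. \<bar>hermite_fun1 m t * hermite_fun1 n t\<bar> \<partial>lborel) \<le> 1"
proof -
  have "(\<integral>t. \<bar>hermite_fun1 m t * hermite_fun1 n t\<bar> \<partial>lborel) \<le>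
      (\<integral>t. (hermite_fun1 m t * hermite_fun1 m t + hermite_fun1 n t * hermite_fun1 n t) / 2 \<partial>lborel)"
  proof (rule integral_mono)
    show "\<bar>hermite_fun1 m t * hermite_fun1 n t\<bar> \<le>
        (hermite_fun1 m t * hermite_fun1 m t + hermite_fun1 n t * hermite_fun1 n t) / 2" for t
      using sum_squares_bound[of "\<bar>hermite_fun1 m t\<bar>" "\<bar>hermite_fun1 n t\<bar>"]
      by (simp add: abs_mult power2_eq_square)
  qed (auto intro!: integrable_abs integrable_hermite_fun1_mult)
  also have "\<dots> = 1"
    by (simp add: integrable_hermite_fun1_mult integral_hermite_fun1_mult)
  finally show ?thesis .
qed

lemma hermite_fun1_minus: "hermite_fun1 n (- t) = (-1) ^ n * hermite_fun1 n t"
  unfolding hermite_fun1_def by (simp add: hermite_poly_minus)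

definition hermite_laguerre_coeff :: "nat \<Rightarrow> nat \<Rightarrow> real" where
  "hermite_laguerre_coeff m q =
     (-1) ^ m * 2 ^ m * fact m / sqrt (fact (2 * m)) / pi powr (1 / 4) * beta_coeff (m - q)"

lemma hermite_fun1_even_sqrt:
  assumes "t \<ge> 0"
  shows "hermite_fun1 (2 * m) (sqrt t) = (\<Sum>q\<le>m. hermite_laguerre_coeff m q * laguerre_fun1 q t)"
proof -
  have "sqrt pi = pi powr (1 / 2)"
    by (simp add: powr_half_sqrt)
  then have "sqrt (sqrt pi) = pi powr (1 / 4)"
    by (simp add: powr_half_sqrt[symmetric] powr_powr)
  moreover have "sqrt (2 ^ (2 * m)) = (2::real) ^ m"
    by (simp add: power_mult real_sqrt_power)
  ultimately have norm: "sqrt (2 ^ (2 * m) * fact (2 * m) * sqrt pi) = 2 ^ m * sqrt (fact (2 * m)) * pi powr (1 / 4)"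
    by (simp add: real_sqrt_mult)
  have "(4::real) ^ m = 2 ^ m * 2 ^ m"
    by (simp flip: power_mult_distrib)
  then have "(-4::real) ^ m = (-1) ^ m * 2 ^ m * 2 ^ m"
    by (simp add: power_minus[of 4])
  moreover have "inverse (a * s * p) * (e * a * a) * f = e * a * f / s / p" if "a \<noteq> 0" for a s p e f :: real
    using that by (simp add: divide_inverse)
  ultimately have scale: "inverse (2 ^ m * sqrt (fact (2 * m)) * pi powr (1 / 4)) * (-4) ^ m * fact m =
      (-1) ^ m * 2 ^ m * fact m / sqrt (fact (2 * m)) / pi powr (1 / 4)"
    by simp
  have "exp (- ((sqrt t)\<^sup>2) / 2) = exp (- t / 2)"
    using assms by simp
  then have "hermite_fun1 (2 * m) (sqrt t) = inverse (2 ^ m * sqrt (fact (2 * m)) * pi powr (1 / 4)) * exp (- t / 2)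
      * ((-4) ^ m * fact m * (\<Sum>q\<le>m. beta_coeff (m - q) * laguerre_poly q t))"
    unfolding hermite_fun1_def norm hermite_poly_even_sqrt_laguerre[OF assms] by simp
  also have "\<dots> = (\<Sum>q\<le>m. (inverse (2 ^ m * sqrt (fact (2 * m)) * pi powr (1 / 4)) * (-4) ^ m * fact m
      * beta_coeff (m - q)) * laguerre_fun1 q t)"
    unfolding laguerre_fun1_def sum_distrib_left by (intro sum.cong refl) (simp only: mult_ac)
  finally show ?thesis
    unfolding scale hermite_laguerre_coeff_def .
qed

lemma
  fixes G :: "'a::euclidean_space \<Rightarrow> real \<Rightarrow> real"
  assumes int: "\<And>b. b \<in> Basis \<Longrightarrow> integrable lborel (G b)"
  shows integrable_prod_Basis: "integrable lborel (\<lambda>x::'a. \<Prod>b\<in>Basis. G b (x \<bullet> b))"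
    and integral_prod_Basis:
      "(\<integral>x. (\<Prod>b\<in>Basis. G b (x \<bullet> b)) \<partial>lborel) = (\<Prod>b\<in>Basis. integral\<^sup>L lborel (G b))"
proof -
  interpret product_sigma_finite "\<lambda>_::'a. lborel"
    by (simp add: product_sigma_finite_def lborel.sigma_finite_measure_axioms)
  define T where "T f = (\<Sum>b\<in>(Basis::'a set). f b *\<^sub>R b)" for f
  have meas[measurable]: "G b \<in> borel_measurable borel" if "b \<in> Basis" for b
    using borel_measurable_integrable[OF int[OF that]] by simp
  have T_meas: "T \<in> measurable (\<Pi>\<^sub>M b\<in>Basis. lborel) borel"
    unfolding T_def by measurable
  have F_meas: "(\<lambda>x::'a. \<Prod>b\<in>Basis. G b (x \<bullet> b)) \<in> borel_measurable borel"
    by measurable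
  have T_coord: "(\<Prod>b\<in>Basis. G b (T f \<bullet> b)) = (\<Prod>b\<in>Basis. G b (f b))" for f
    by (intro prod.cong) (simp_all add: T_def inner_sum_left inner_Basis if_distrib cong: if_cong)
  have "integrable (\<Pi>\<^sub>M b\<in>Basis. lborel) (\<lambda>f. \<Prod>b\<in>Basis. G b (f b))"
    by (intro product_integrable_prod int) simp
  then show "integrable lborel (\<lambda>x::'a. \<Prod>b\<in>Basis. G b (x \<bullet> b))"
    by (subst lborel_eq, subst integrable_distr_eq[OF T_meas[unfolded T_def] F_meas])
      (simp add: T_coord[unfolded T_def])
  have "(\<integral>x. (\<Prod>b\<in>Basis. G b (x \<bullet> b)) \<partial>lborel) =
      (\<integral>f. (\<Prod>b\<in>Basis. G b (T f \<bullet> b)) \<partial>(\<Pi>\<^sub>M b\<in>Basis. lborel))"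
    by (subst lborel_eq, subst integral_distr[OF T_meas[unfolded T_def] F_meas]) (simp add: T_def)
  also have "\<dots> = (\<Prod>b\<in>Basis. integral\<^sup>L lborel (G b))"
    unfolding T_coord by (intro product_integral_prod int) simp
  finally show "(\<integral>x. (\<Prod>b\<in>Basis. G b (x \<bullet> b)) \<partial>lborel) = (\<Prod>b\<in>Basis. integral\<^sup>L lborel (G b))" .
qed

lemma
  fixes g :: "'d::finite \<Rightarrow> real \<Rightarrow> real"
  assumes int: "\<And>j. integrable lborel (g j)"
  shows integrable_prod_vec: "integrable lborel (\<lambda>x::real^'d. \<Prod>j\<in>UNIV. g j (x $ j))"
    and integral_prod_vec:
      "(\<integral>x. (\<Prod>j\<in>UNIV. g j (x $ j)) \<partial>lborel) = (\<Prod>j\<in>UNIV. integral\<^sup>L lborel (g j))"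
proof -
  define e where "e j = (axis j 1 :: real^'d)" for j
  define G where "G b = g (inv e b)" for b
  have inj: "inj e"
    by (auto simp: inj_def e_def axis_eq_axis)
  have Basis: "Basis = range e"
    unfolding Basis_vec_def e_def by auto
  have reindex: "(\<Prod>j\<in>UNIV. c j) = (\<Prod>b\<in>(Basis :: (real^'d) set). c (inv e b))" for c :: "'d \<Rightarrow> real"
    unfolding Basis using inj by (simp add: prod.reindex)
  have coords: "(\<Prod>j\<in>UNIV. g j (x $ j)) = (\<Prod>b\<in>Basis. G b (x \<bullet> b))" for x :: "real^'d"
    unfolding reindex[of "\<lambda>j. g j (x $ j)"] G_def Basis using inj
    using inv_f_f[OF inj] by (intro prod.cong) (auto simp: e_def inner_axis)
  have G_int: "integrable lborel (G b)" for b
    unfolding G_def by (rule int)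
  show "integrable lborel (\<lambda>x::real^'d. \<Prod>j\<in>UNIV. g j (x $ j))"
    unfolding coords by (rule integrable_prod_Basis[OF G_int])
  show "(\<integral>x. (\<Prod>j\<in>UNIV. g j (x $ j)) \<partial>lborel) = (\<Prod>j\<in>UNIV. integral\<^sup>L lborel (g j))"
    unfolding coords integral_prod_Basis[OF G_int] by (simp add: reindex G_def)
qed

lemma hermite_fun_eq_prod: "hermite_fun n x = (\<Prod>j\<in>UNIV. hermite_fun1 (n j) (x $ j))"
  unfolding hermite_fun_def hermite_fun1_def ..

lemma laguerre_fun_eq_prod: "laguerre_fun n x = (\<Prod>j\<in>UNIV. laguerre_fun1 (n j) (x $ j))"
  unfolding laguerre_fun_def laguerre_fun1_def ..

lemma hermite_fun_mult_eq_prod: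
  "hermite_fun k x * hermite_fun n x = (\<Prod>j\<in>UNIV. hermite_fun1 (k j) (x $ j) * hermite_fun1 (n j) (x $ j))"
  unfolding hermite_fun_eq_prod by (simp add: prod.distrib)

lemma integrable_hermite_fun_mult: "integrable lborel (\<lambda>x. hermite_fun k x * hermite_fun n x)"
  unfolding hermite_fun_mult_eq_prod by (rule integrable_prod_vec[OF integrable_hermite_fun1_mult])

lemma integral_hermite_fun_mult:
  "(\<integral>x. hermite_fun k x * hermite_fun n x \<partial>lborel) = (if k = n then 1 else 0)"
  unfolding hermite_fun_mult_eq_prod integral_prod_vec[OF integrable_hermite_fun1_mult] integral_hermite_fun1_mult
  by (auto simp: fun_eq_iff)

lemma integral_abs_hermite_fun_mult_le:
  "(\<integral>x. \<bar>hermite_fun k x * hermite_fun n x\<bar> \<partial>lborel) \<le> 1"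
proof -
  have "(\<integral>x. \<bar>hermite_fun k x * hermite_fun n x\<bar> \<partial>lborel) =
      (\<Prod>j\<in>UNIV. \<integral>t. \<bar>hermite_fun1 (k j) t * hermite_fun1 (n j) t\<bar> \<partial>lborel)"
    unfolding hermite_fun_mult_eq_prod abs_prod
    by (rule integral_prod_vec[OF integrable_abs[OF integrable_hermite_fun1_mult]])
  also have "\<dots> \<le> (\<Prod>j\<in>(UNIV::'a set). 1)"
    by (intro prod_mono conjI integral_abs_hermite_fun1_mult_le integral_nonneg_AE) auto
  finally show ?thesis
    by simp
qed

section \<open>Hermite coefficients\<close>

lemma has_sum_integral:
  fixes F :: "'i::countable \<Rightarrow> 'a \<Rightarrow> 'b::{banach, second_countable_topology}"
  assumes inf: "infinite (UNIV :: 'i set)"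
    and int: "\<And>i. integrable M (F i)"
    and sum: "\<And>x. ((\<lambda>i. F i x) has_sum G x) UNIV"
    and abs: "\<And>x. (\<lambda>i. norm (F i x)) summable_on UNIV"
    and int_abs: "(\<lambda>i. \<integral>x. norm (F i x) \<partial>M) summable_on UNIV"
  shows "((\<lambda>i. \<integral>x. F i x \<partial>M) has_sum (\<integral>x. G x \<partial>M)) UNIV"
proof -
  define e where "e = from_nat_into (UNIV :: 'i set)"
  have bij: "bij_betw e UNIV UNIV"
    unfolding e_def using inf by (intro bij_betw_from_nat_into) auto
  have summable_nat: "summable (\<lambda>n. f (e n))" if "f summable_on UNIV" "\<And>i. f i \<ge> 0" for f :: "'i \<Rightarrow> real"
  proof -
    have "(\<lambda>n. f (e n)) summable_on UNIV"
      using that(1) by (subst summable_on_reindex_bij_betw[OF bij])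
    then show ?thesis
      using that(2) by (simp add: summable_on_UNIV_nonneg_real_iff)
  qed
  have G: "G x = (\<Sum>n. F (e n) x)" for x
  proof -
    have "((\<lambda>n. F (e n) x) has_sum G x) UNIV"
      using sum[of x] by (subst has_sum_reindex_bij_betw[OF bij])
    then show ?thesis
      by (intro sums_unique has_sum_imp_sums)
  qed
  have int_norm: "summable (\<lambda>n. \<integral>x. norm (F (e n) x) \<partial>M)"
    by (rule summable_nat[OF int_abs]) simp
  have "(\<lambda>n. \<integral>x. F (e n) x \<partial>M) sums (\<integral>x. (\<Sum>n. F (e n) x) \<partial>M)"
  proof (rule sums_integral)
    show "AE x in M. summable (\<lambda>n. norm (F (e n) x))"
      by (intro AE_I2 summable_nat[OF abs]) simp
  qed (use int int_norm in auto)
  then have sums: "(\<lambda>n. \<integral>x. F (e n) x \<partial>M) sums (\<integral>x. G x \<partial>M)"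
    by (simp add: G)
  have "summable (\<lambda>n. norm (\<integral>x. F (e n) x \<partial>M))"
    using int_norm by (rule summable_comparison_test') (simp add: integral_norm_bound)
  then have "((\<lambda>n. \<integral>x. F (e n) x \<partial>M) has_sum (\<integral>x. G x \<partial>M)) UNIV"
    using sums by (rule norm_summable_imp_has_sum)
  then show ?thesis
    by (subst (asm) has_sum_reindex_bij_betw[OF bij])
qed

lemma infinite_UNIV_multi_index: "infinite (UNIV :: ('d \<Rightarrow> nat) set)"
proof -
  have "inj (\<lambda>m::nat. \<lambda>_::'d. m)"
    by (auto simp: inj_def fun_eq_iff)
  then have "infinite (range (\<lambda>m::nat. \<lambda>_::'d. m))"
    by (rule range_inj_infinite)
  then show ?thesis
    by (rule infinite_super[rotated]) simp
qed

lemma hermite_coeff_eqI: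
  fixes c :: "('d::finite \<Rightarrow> nat) \<Rightarrow> complex"
  assumes sum: "\<And>x. ((\<lambda>k. c k * complex_of_real (hermite_fun k x)) has_sum f x) UNIV"
    and abs: "\<And>x. (\<lambda>k. norm (c k * complex_of_real (hermite_fun k x))) summable_on UNIV"
    and c_abs: "(\<lambda>k. norm (c k)) summable_on UNIV"
  shows "hermite_coeff f n = c n"
proof -
  define F where "F k x = c k * complex_of_real (hermite_fun k x * hermite_fun n x)" for k x
  have int: "integrable lborel (F k)" for k
    unfolding F_def
    by (intro integrable_mult_right) (simp only: complex_of_real_integrable_eq integrable_hermite_fun_mult)
  have norm_F: "norm (F k x) = norm (c k * complex_of_real (hermite_fun k x)) * \<bar>hermite_fun n x\<bar>" for k x
    by (simp add: F_def norm_mult abs_mult)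
  have int_norm: "(\<integral>x. norm (F k x) \<partial>lborel) \<le> norm (c k)" for k
  proof -
    have "(\<integral>x. norm (F k x) \<partial>lborel) = norm (c k) * (\<integral>x. \<bar>hermite_fun k x * hermite_fun n x\<bar> \<partial>lborel)"
      by (simp add: F_def norm_mult abs_mult)
    also have "\<dots> \<le> norm (c k)"
      using mult_left_mono[OF integral_abs_hermite_fun_mult_le, of "norm (c k)" k n] by simp
    finally show ?thesis .
  qed
  have int_F: "(\<integral>x. F k x \<partial>lborel) = (if k = n then c n else 0)" for k
    unfolding F_def
    by (simp only: integral_mult_right_zero integral_complex_of_real integral_hermite_fun_mult) simp
  have "((\<lambda>k. \<integral>x. F k x \<partial>lborel) has_sum (\<integral>x. f x * complex_of_real (hermite_fun n x) \<partial>lborel)) UNIV"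
  proof (rule has_sum_integral[OF infinite_UNIV_multi_index int])
    show "((\<lambda>k. F k x) has_sum f x * complex_of_real (hermite_fun n x)) UNIV" for x
      using has_sum_cmult_right[OF sum[of x], of "complex_of_real (hermite_fun n x)"]
      by (simp add: F_def mult_ac)
    show "(\<lambda>k. norm (F k x)) summable_on UNIV" for x
      unfolding norm_F by (intro summable_on_cmult_left abs)
    show "(\<lambda>k. \<integral>x. norm (F k x) \<partial>lborel) summable_on UNIV"
      by (rule summable_on_comparison_test[OF c_abs]) (auto intro: int_norm)
  qed
  moreover have "((\<lambda>k. \<integral>x. F k x \<partial>lborel) has_sum c n) UNIV"
    by (intro has_sum_finite_neutralI[of "{n}"]) (simp_all add: int_F)
  ultimately show ?thesis
    unfolding hermite_coeff_def by (rule has_sum_unique)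
qed

lemma hermite_fun_reflect:
  "hermite_fun k (\<chi> i. if i = j then - (x $ i) else x $ i) = (-1) ^ k j * hermite_fun k x"
proof -
  have "hermite_fun k (\<chi> i. if i = j then - (x $ i) else x $ i) =
      (-1) ^ k j * hermite_fun1 (k j) (x $ j) * (\<Prod>i\<in>UNIV - {j}. hermite_fun1 (k i) (x $ i))"
    unfolding hermite_fun_eq_prod by (subst prod.remove[of UNIV j]) (auto simp: hermite_fun1_minus)
  also have "\<dots> = (-1) ^ k j * hermite_fun k x"
    unfolding hermite_fun_eq_prod by (subst prod.remove[of UNIV j]) auto
  finally show ?thesis .
qed

text \<open>Averaging the expansion of \<open>f\<close> with that of its reflection in the \<open>j\<close>-th coordinate kills
  the terms with odd \<open>k j\<close>; doing this for every coordinate leaves the even multi-indices.\<close>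
lemma has_sum_hermite_even:
  fixes a :: "('d::finite \<Rightarrow> nat) \<Rightarrow> complex"
  assumes sum: "\<And>x. ((\<lambda>k. a k * complex_of_real (hermite_fun k x)) has_sum f x) UNIV"
    and even: "\<And>j x. f (\<chi> i. if i = j then - (x $ i) else x $ i) = f x"
  shows "((\<lambda>n. a (\<lambda>j. 2 * n j) * complex_of_real (hermite_fun (\<lambda>j. 2 * n j) x)) has_sum f x) UNIV"
proof -
  define A where "A J k = (if \<forall>j\<in>J. even (k j) then a k else 0)" for J and k :: "'d \<Rightarrow> nat"
  have even_part: "((\<lambda>k. A J k * complex_of_real (hermite_fun k x)) has_sum f x) UNIV" for J x
    using finite[of J]
  proof (induction J arbitrary: x rule: finite_induct)
    case empty
    then show ?case using sum by (simp add: A_def)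
  next
    case (insert j J)
    define y where "y = (\<chi> i. if i = j then - (x $ i) else x $ i)"
    have "((\<lambda>k. A J k * complex_of_real (hermite_fun k y)) has_sum f y) UNIV"
      by (rule insert.IH)
    then have "((\<lambda>k. A J k * ((-1) ^ k j * complex_of_real (hermite_fun k x))) has_sum f x) UNIV"
      by (simp add: y_def hermite_fun_reflect even)
    from has_sum_add[OF insert.IH[of x] this]
    have "((\<lambda>k. 1 / 2 * (A J k * complex_of_real (hermite_fun k x)
        + A J k * ((-1) ^ k j * complex_of_real (hermite_fun k x)))) has_sum (1 / 2 * (f x + f x))) UNIV"
      by (rule has_sum_cmult_right)
    moreover have "1 / 2 * (A J k * complex_of_real (hermite_fun k x)
        + A J k * ((-1) ^ k j * complex_of_real (hermite_fun k x)))
        = A (insert j J) k * complex_of_real (hermite_fun k x)" for k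
      by (cases "even (k j)") (auto simp: A_def)
    ultimately show ?case
      by simp
  qed
  define dbl where "dbl n = (\<lambda>j. 2 * n j)" for n :: "'d \<Rightarrow> nat"
  have even_range: "k \<in> range dbl" if "\<forall>j. even (k j)" for k
    using that by (intro image_eqI[of _ _ "\<lambda>j. k j div 2"]) (auto simp: dbl_def fun_eq_iff)
  have "((\<lambda>k. A UNIV k * complex_of_real (hermite_fun k x)) has_sum f x) (range dbl)"
    using even_part[of UNIV x]
    by (subst has_sum_cong_neutral[where T = UNIV]) (auto simp: A_def dest: even_range)
  moreover have "inj dbl"
    by (auto simp: inj_def dbl_def fun_eq_iff)
  ultimately have "(((\<lambda>k. A UNIV k * complex_of_real (hermite_fun k x)) \<circ> dbl) has_sum f x) UNIV"
    by (simp add: has_sum_reindex)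
  then show ?thesis
    by (simp add: o_def A_def dbl_def)
qed

section \<open>Multi-index series\<close>

lemma mfact_pos: "mfact n > 0"
  unfolding mfact_def by (intro prod_pos) auto

lemma mfact_ge_1: "mfact n \<ge> 1"
  unfolding mfact_def by (intro prod_ge_1) auto

lemma fact_mult_le_fact_add: "fact a * fact b \<le> (fact (a + b) :: real)"
proof -
  have "fact a * fact b * ((a + b) choose a) = (fact (a + b) :: nat)"
    using binomial_fact_lemma[of a "a + b"] by simp
  then have "fact a * fact b * real ((a + b) choose a) = fact (a + b)"
    by (metis of_nat_fact of_nat_mult)
  moreover have "fact a * fact b * 1 \<le> fact a * fact b * real ((a + b) choose a)"
    by (intro mult_left_mono) (auto simp: Suc_leI)
  ultimately show ?thesis
    by simp
qed

lemma mfact_mult_le: "mfact k * mfact n \<le> mfact (\<lambda>j. k j + n j)"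
  unfolding mfact_def prod.distrib[symmetric] by (intro prod_mono conjI fact_mult_le_fact_add) auto

lemma mfact_square_le: "mfact n * mfact n \<le> mfact (\<lambda>j. 2 * n j)"
  unfolding mfact_def prod.distrib[symmetric] by (intro prod_mono conjI square_fact_le_2_fact) auto

lemma power_mabs: "(c::'a::comm_monoid_mult) ^ mabs n = (\<Prod>j\<in>UNIV. c ^ n j)"
  by (simp add: mabs_def power_sum)

lemma mabs_add: "mabs (\<lambda>j. k j + n j) = mabs k + mabs n"
  by (simp add: mabs_def sum.distrib)

lemma summable_on_prod_nat_fun:
  fixes \<phi> :: "nat \<Rightarrow> real"
  assumes nonneg: "\<And>m. \<phi> m \<ge> 0" and summable: "summable \<phi>"
  shows "(\<lambda>k::'d::finite \<Rightarrow> nat. \<Prod>j\<in>UNIV. \<phi> (k j)) summable_on UNIV"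
proof (rule nonneg_bdd_above_summable_on)
  show "0 \<le> (\<Prod>j\<in>UNIV. \<phi> (k j))" for k :: "'d \<Rightarrow> nat"
    by (intro prod_nonneg) (simp add: nonneg)
  show "bdd_above (sum (\<lambda>k::'d \<Rightarrow> nat. \<Prod>j\<in>UNIV. \<phi> (k j)) ` {F. F \<subseteq> UNIV \<and> finite F})"
  proof (rule bdd_aboveI, clarify)
    fix F :: "('d \<Rightarrow> nat) set"
    assume "finite F"
    define N where "N = Max (insert 0 (\<Union>k\<in>F. range k))"
    have "finite (insert 0 (\<Union>k\<in>F. range k))"
      using \<open>finite F\<close> by auto
    then have sub: "F \<subseteq> PiE (UNIV :: 'd set) (\<lambda>_. {..N})"
      unfolding N_def by (auto simp: PiE_iff intro!: Max_ge)
    have "(\<Sum>k\<in>F. \<Prod>j\<in>UNIV. \<phi> (k j)) \<le> (\<Sum>k\<in>PiE (UNIV :: 'd set) (\<lambda>_. {..N}). \<Prod>j\<in>UNIV. \<phi> (k j))"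
      by (intro sum_mono2) (use sub in \<open>auto intro: prod_nonneg nonneg finite_PiE\<close>)
    also have "\<dots> = (\<Prod>j\<in>(UNIV::'d set). \<Sum>m\<le>N. \<phi> m)"
      by (rule prod_sum_PiE[symmetric]) auto
    also have "\<dots> \<le> (\<Prod>j\<in>(UNIV::'d set). suminf \<phi>)"
      by (intro prod_mono conjI sum_nonneg sum_le_suminf summable nonneg) auto
    finally show "(\<Sum>k\<in>F. \<Prod>j\<in>UNIV. \<phi> (k j)) \<le> (\<Prod>j\<in>(UNIV::'d set). suminf \<phi>)" .
  qed
qed

lemma summable_on_product_nonneg:
  fixes u v :: "_ \<Rightarrow> real"
  assumes "\<And>x. u x \<ge> 0" "\<And>y. v y \<ge> 0" "u summable_on A" "v summable_on B"
  shows "(\<lambda>(x, y). u x * v y) summable_on A \<times> B"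
proof -
  have "(\<lambda>(x, y). u x * v y) summable_on Sigma A (\<lambda>_. B)"
  proof (rule summable_on_SigmaI)
    show "((\<lambda>y. case (x, y) of (x, y) \<Rightarrow> u x * v y) has_sum u x * infsum v B) B" for x
      using has_sum_cmult_right[OF has_sum_infsum[OF assms(4)], of "u x"] by simp
    show "(\<lambda>x. u x * infsum v B) summable_on A"
      using assms(3) by (rule summable_on_cmult_left)
  qed (use assms in auto)
  then show ?thesis
    by simp
qed

lemma has_sum_multi_index_diagonals:
  fixes F :: "('d::finite \<Rightarrow> nat) \<times> ('d \<Rightarrow> nat) \<Rightarrow> 'a::banach"
  assumes summable: "F summable_on UNIV"
    and diagonals: "((\<lambda>n. \<Sum>p\<in>PiE UNIV (\<lambda>j. {..n j}). F (p, \<lambda>j. n j - p j)) has_sum y) UNIV"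
  shows "((\<lambda>p. \<Sum>\<^sub>\<infinity>k. F (p, k)) has_sum y) UNIV"
proof -
  define S where "S = infsum F UNIV"
  define box where "box n = PiE UNIV (\<lambda>j. {..n j})" for n :: "'d \<Rightarrow> nat"
  define G where "G z = (case z of (n, p) \<Rightarrow> F (p, \<lambda>j. n j - p j))" for z :: "('d \<Rightarrow> nat) \<times> ('d \<Rightarrow> nat)"
  define \<Phi> where "\<Phi> z = (case z of (p, k) \<Rightarrow> ((\<lambda>j. k j + p j), p))" for z :: "('d \<Rightarrow> nat) \<times> ('d \<Rightarrow> nat)"
  have S: "(F has_sum S) (UNIV \<times> UNIV)"
    using summable by (simp add: S_def)
  have bij: "bij_betw \<Phi> (UNIV \<times> UNIV) (Sigma UNIV box)"
  proof (rule bij_betwI[where g = "\<lambda>(n, p). (p, \<lambda>j. n j - p j)"])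
    show "\<Phi> \<in> UNIV \<times> UNIV \<rightarrow> Sigma UNIV box"
      by (auto simp: \<Phi>_def box_def PiE_iff)
  qed (auto simp: \<Phi>_def box_def PiE_iff fun_eq_iff)
  have "(\<lambda>z. G (\<Phi> z)) = F"
    by (auto simp: fun_eq_iff G_def \<Phi>_def)
  then have "(G has_sum S) (Sigma UNIV box)"
    using S has_sum_reindex_bij_betw[OF bij, of G S] by simp
  then have "((\<lambda>n. \<Sum>p\<in>box n. F (p, \<lambda>j. n j - p j)) has_sum S) UNIV"
    by (rule has_sum_SigmaD) (auto simp: box_def G_def intro!: has_sum_finite finite_PiE)
  then have "S = y"
    using diagonals unfolding box_def by (rule has_sum_unique)
  have fibres: "((\<lambda>k. F (p, k)) has_sum (\<Sum>\<^sub>\<infinity>k. F (p, k))) UNIV" for p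
  proof -
    have "inj (Pair p)"
      by (simp add: inj_on_def)
    moreover have "F summable_on range (Pair p)"
      using summable_on_subset_banach[OF summable, of "range (Pair p)"] by simp
    ultimately have "(F \<circ> Pair p) summable_on UNIV"
      by (rule summable_on_reindex[THEN iffD1])
    then show ?thesis
      by (simp add: o_def)
  qed
  have "((\<lambda>p. \<Sum>\<^sub>\<infinity>k. F (p, k)) has_sum S) UNIV"
    by (rule has_sum_SigmaD[OF S fibres])
  with \<open>S = y\<close> show ?thesis
    by simp
qed

text \<open>\<open>(2\<rho>)^m / m!^\<epsilon> = (r^m / m!)^\<epsilon>\<close> with \<open>r = (2\<rho>)^(1/\<epsilon>)\<close> is bounded by the exponential
  series, so the terms are dominated by a multiple of \<open>2^-m\<close>.\<close>
lemma summable_power_div_fact_powr: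
  fixes \<rho> \<epsilon> :: real
  assumes eps: "\<epsilon> > 0" and rho: "\<rho> \<ge> 0"
  shows "summable (\<lambda>m. \<rho> ^ m / fact m powr \<epsilon>)"
proof -
  define r where "r = (2 * \<rho>) powr (1 / \<epsilon>)"
  have "(\<lambda>n. r ^ n / fact n) \<longlonglongrightarrow> 0"
    using summable_LIMSEQ_zero[OF summable_exp[of r]] by (simp add: divide_inverse mult.commute)
  then obtain B where B: "\<And>n. norm (r ^ n / fact n) \<le> B"
    by (metis Bseq_def convergentI convergent_imp_Bseq)
  have bounded: "(2 * \<rho>) ^ n / fact n powr \<epsilon> \<le> B powr \<epsilon>" for n
  proof (cases "\<rho> = 0")
    case True
    then show ?thesis
      using B[of 0] eps by (cases n) (auto intro: ge_one_powr_ge_zero)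
  next
    case False
    with rho have pos: "2 * \<rho> > 0"
      by simp
    have "r ^ n = (2 * \<rho>) powr (real n / \<epsilon>)"
      unfolding r_def using pos by (simp add: powr_power)
    then have "(r ^ n) powr \<epsilon> = (2 * \<rho>) powr real n"
      using eps by (simp add: powr_powr)
    also have "\<dots> = (2 * \<rho>) ^ n"
      using pos by (rule powr_realpow)
    finally have "(r ^ n) powr \<epsilon> = (2 * \<rho>) ^ n" .
    then have "(2 * \<rho>) ^ n / fact n powr \<epsilon> = (r ^ n / fact n) powr \<epsilon>"
      unfolding r_def by (simp add: powr_divide)
    also have "\<dots> \<le> B powr \<epsilon>"
      using B[of n] eps by (intro powr_mono2) (auto simp: r_def)
    finally show ?thesis .
  qed
  show ?thesis
  proof (rule summable_comparison_test')
    show "summable (\<lambda>n. B powr \<epsilon> * (1 / 2) ^ n)"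
      by (intro summable_mult summable_geometric) simp
    show "norm (\<rho> ^ n / fact n powr \<epsilon>) \<le> B powr \<epsilon> * (1 / 2) ^ n" for n
    proof -
      have "\<rho> ^ n / fact n powr \<epsilon> = (2 * \<rho>) ^ n / fact n powr \<epsilon> * (1 / 2) ^ n"
        by (simp add: power_mult_distrib field_simps)
      also have "\<dots> \<le> B powr \<epsilon> * (1 / 2) ^ n"
        by (rule mult_right_mono[OF bounded]) simp
      finally show ?thesis
        using rho by simp
    qed
  qed
qed

definition flat_weight :: "real \<Rightarrow> real \<Rightarrow> ('d::finite \<Rightarrow> nat) \<Rightarrow> real" where
  "flat_weight \<epsilon> r n = r ^ mabs n / mfact n powr \<epsilon>"

lemma flat_weight_nonneg: "r \<ge> 0 \<Longrightarrow> flat_weight \<epsilon> r n \<ge> 0"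
  unfolding flat_weight_def by simp

lemma summable_on_flat_weight:
  assumes "\<epsilon> > 0" "r \<ge> 0"
  shows "flat_weight \<epsilon> r summable_on (UNIV :: ('d::finite \<Rightarrow> nat) set)"
proof -
  have "(\<lambda>k::'d \<Rightarrow> nat. \<Prod>j\<in>UNIV. r ^ k j / fact (k j) powr \<epsilon>) summable_on UNIV"
    using assms by (intro summable_on_prod_nat_fun summable_power_div_fact_powr) auto
  moreover have "(\<Prod>j\<in>UNIV. r ^ k j / fact (k j) powr \<epsilon>) = flat_weight \<epsilon> r k" for k :: "'d \<Rightarrow> nat"
    by (simp add: flat_weight_def power_mabs mfact_def prod_powr_distrib prod_dividef)
  ultimately show ?thesis
    by simp
qed

lemma flat_weight_mult: "flat_weight \<epsilon> (r * s) n = r ^ mabs n * flat_weight \<epsilon> s n"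
  unfolding flat_weight_def by (simp add: power_mult_distrib)

lemma flat_weight_add_le:
  assumes "\<epsilon> \<ge> 0" "r \<ge> 0"
  shows "flat_weight \<epsilon> r (\<lambda>j. k j + n j) \<le> flat_weight \<epsilon> r k * flat_weight \<epsilon> r n"
proof -
  have "mfact k powr \<epsilon> * mfact n powr \<epsilon> = (mfact k * mfact n) powr \<epsilon>"
    by (rule powr_mult[symmetric])
  also have "\<dots> \<le> mfact (\<lambda>j. k j + n j) powr \<epsilon>"
    using assms mfact_pos[of k] mfact_pos[of n] by (intro powr_mono2 mfact_mult_le) auto
  finally have le: "mfact k powr \<epsilon> * mfact n powr \<epsilon> \<le> mfact (\<lambda>j. k j + n j) powr \<epsilon>" .
  have "flat_weight \<epsilon> r (\<lambda>j. k j + n j) = r ^ mabs k * r ^ mabs n / mfact (\<lambda>j. k j + n j) powr \<epsilon>"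
    by (simp add: flat_weight_def mabs_add power_add)
  also have "\<dots> \<le> r ^ mabs k * r ^ mabs n / (mfact k powr \<epsilon> * mfact n powr \<epsilon>)"
    using le assms mfact_pos[of k] mfact_pos[of n] by (intro frac_le) auto
  also have "\<dots> = flat_weight \<epsilon> r k * flat_weight \<epsilon> r n"
    by (simp add: flat_weight_def)
  finally show ?thesis .
qed

lemma flat_weight_double_le:
  assumes "\<epsilon> \<ge> 0" "r \<ge> 0"
  shows "flat_weight \<epsilon> r (\<lambda>j. 2 * n j) \<le> flat_weight (2 * \<epsilon>) (r\<^sup>2) n"
proof -
  have "mfact n powr (2 * \<epsilon>) = (mfact n * mfact n) powr \<epsilon>"
    unfolding mult_2 powr_add by (rule powr_mult[symmetric])
  also have "\<dots> \<le> mfact (\<lambda>j. 2 * n j) powr \<epsilon>"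
    using assms mfact_pos[of n] by (intro powr_mono2 mfact_square_le) auto
  finally have le: "mfact n powr (2 * \<epsilon>) \<le> mfact (\<lambda>j. 2 * n j) powr \<epsilon>" .
  have "mabs (\<lambda>j. 2 * n j) = 2 * mabs n"
    by (simp add: mabs_def sum_distrib_left)
  then have "flat_weight \<epsilon> r (\<lambda>j. 2 * n j) = (r\<^sup>2) ^ mabs n / mfact (\<lambda>j. 2 * n j) powr \<epsilon>"
    by (simp add: flat_weight_def power_mult)
  also have "\<dots> \<le> (r\<^sup>2) ^ mabs n / mfact n powr (2 * \<epsilon>)"
    using le assms mfact_pos[of n] by (intro frac_le) auto
  finally show ?thesis
    by (simp add: flat_weight_def)
qed

lemma ell_flat_iff:
  "a \<in> ell_flat \<tau> \<longleftrightarrow> (\<exists>C\<ge>0. \<exists>\<rho>>0. \<forall>n. norm (a n) \<le> C * flat_weight (1 / (2 * \<tau>)) \<rho> n)"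
proof
  assume "a \<in> ell_flat \<tau>"
  then obtain h C where h: "h > 0" and C: "\<And>n. norm (a n) * h ^ mabs n * mfact n powr (1 / (2 * \<tau>)) \<le> C"
    unfolding ell_flat_def by blast
  have "C \<ge> 0"
    using C[of n] h by (smt (verit) norm_ge_zero powr_ge_zero zero_le_mult_iff zero_le_power)
  moreover have "norm (a n) \<le> C * flat_weight (1 / (2 * \<tau>)) (1 / h) n" for n
    using C[of n] h mfact_pos[of n] by (simp add: flat_weight_def field_simps power_one_over)
  moreover have "1 / h > 0"
    using h by simp
  ultimately show "\<exists>C\<ge>0. \<exists>\<rho>>0. \<forall>n. norm (a n) \<le> C * flat_weight (1 / (2 * \<tau>)) \<rho> n"
    by blast
next
  assume "\<exists>C\<ge>0. \<exists>\<rho>>0. \<forall>n. norm (a n) \<le> C * flat_weight (1 / (2 * \<tau>)) \<rho> n"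
  then obtain C \<rho> where \<rho>: "\<rho> > 0" and C: "\<And>n. norm (a n) \<le> C * flat_weight (1 / (2 * \<tau>)) \<rho> n"
    by blast
  have "norm (a n) * (1 / \<rho>) ^ mabs n * mfact n powr (1 / (2 * \<tau>)) \<le> C" for n
    using C[of n] \<rho> mfact_pos[of n] by (simp add: flat_weight_def field_simps power_one_over)
  with \<rho> show "a \<in> ell_flat \<tau>"
    unfolding ell_flat_def by (intro CollectI exI[of _ "1 / \<rho>"]) auto
qed

lemma ell_flat_mono:
  assumes "0 < \<tau>" "\<tau> \<le> \<tau>'"
  shows "ell_flat \<tau> \<subseteq> ell_flat \<tau>'"
proof
  fix a assume "a \<in> ell_flat \<tau>"
  then obtain h C where h: "h > 0" and C: "\<And>n. norm (a n) * h ^ mabs n * mfact n powr (1 / (2 * \<tau>)) \<le> C"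
    unfolding ell_flat_def by blast
  have "norm (a n) * h ^ mabs n * mfact n powr (1 / (2 * \<tau>')) \<le> C" for n
  proof -
    have "mfact n powr (1 / (2 * \<tau>')) \<le> mfact n powr (1 / (2 * \<tau>))"
      using assms mfact_ge_1[of n] by (intro powr_mono) (auto simp: frac_le)
    then show ?thesis
      using C[of n] h by (meson mult_left_mono norm_ge_zero order_trans zero_le_mult_iff zero_le_power less_imp_le)
  qed
  with h show "a \<in> ell_flat \<tau>'"
    unfolding ell_flat_def by blast
qed

section \<open>Laguerre coefficients of an even Hermite series\<close>

definition laguerre_scale :: "('d::finite \<Rightarrow> nat) \<Rightarrow> real" where
  "laguerre_scale n = (-1) ^ mabs n * 2 ^ mabs n / pi powr (real CARD('d) / 4)"

definition laguerre_weight :: "('d::finite \<Rightarrow> nat) \<Rightarrow> ('d \<Rightarrow> nat) \<Rightarrow> real" where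
  "laguerre_weight k n = mbinom (\<lambda>j. real (k j) - 3 / 2) k * (-1) ^ mabs k * 2 ^ mabs k
     * mfact (\<lambda>j. k j + n j) / sqrt (mfact (\<lambda>j. 2 * (k j + n j)))"

lemma mbinom_eq_prod_beta_coeff: "mbinom (\<lambda>j. real (k j) - 3 / 2) k = (\<Prod>j\<in>UNIV. beta_coeff (k j))"
  unfolding mbinom_def beta_coeff_def ..

lemma prod_hermite_laguerre_coeff:
  fixes k n :: "'d::finite \<Rightarrow> nat"
  shows "(\<Prod>j\<in>UNIV. hermite_laguerre_coeff (k j + n j) (n j)) = laguerre_scale n * laguerre_weight k n"
proof -
  have sqrt_prod: "sqrt (\<Prod>j\<in>A. f j) = (\<Prod>j\<in>A. sqrt (f j))" for A and f :: "'d \<Rightarrow> real"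
    by (induction A rule: infinite_finite_induct) (auto simp: real_sqrt_mult)
  have "(\<Prod>j\<in>UNIV. hermite_laguerre_coeff (k j + n j) (n j)) =
      (\<Prod>j\<in>UNIV. ((-1) ^ n j * 2 ^ n j) * ((-1) ^ k j * 2 ^ k j) * beta_coeff (k j)
        * fact (k j + n j) / sqrt (fact (2 * (k j + n j))) / pi powr (1 / 4))"
    unfolding hermite_laguerre_coeff_def by (intro prod.cong refl) (simp add: power_add field_simps)
  also have "\<dots> = ((-1) ^ mabs n * 2 ^ mabs n) * ((-1) ^ mabs k * 2 ^ mabs k) * (\<Prod>j\<in>UNIV. beta_coeff (k j))
      * mfact (\<lambda>j. k j + n j) / sqrt (mfact (\<lambda>j. 2 * (k j + n j))) / (\<Prod>j\<in>(UNIV::'d set). pi powr (1 / 4))"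
    by (simp only: mfact_def sqrt_prod power_mabs prod_dividef prod.distrib)
  also have "(\<Prod>j\<in>(UNIV::'d set). pi powr (1 / 4)) = pi powr (real CARD('d) / 4)"
    by (simp add: powr_power)
  finally show ?thesis
    unfolding laguerre_scale_def laguerre_weight_def mbinom_eq_prod_beta_coeff by (simp add: field_simps)
qed

lemma abs_beta_coeff_le: "\<bar>beta_coeff r\<bar> \<le> 1"
proof -
  have "beta_coeff r = (\<Prod>i = 0..<r. (real (r - i) - 3 / 2) / real (r - i))"
    unfolding beta_coeff_def gbinomial_altdef_of_nat by (intro prod.cong) (auto simp: of_nat_diff)
  then have "\<bar>beta_coeff r\<bar> = (\<Prod>i = 0..<r. \<bar>(real (r - i) - 3 / 2) / real (r - i)\<bar>)"
    by (simp add: abs_prod)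
  also have "\<dots> \<le> 1"
    by (rule prod_le_1) auto
  finally show ?thesis .
qed

lemma mfact_div_sqrt_mfact_double_le: "mfact n / sqrt (mfact (\<lambda>j. 2 * n j)) \<le> 1"
proof -
  have "mfact n = sqrt (mfact n * mfact n)"
    using mfact_pos[of n] by simp
  also have "\<dots> \<le> sqrt (mfact (\<lambda>j. 2 * n j))"
    by (rule real_sqrt_le_mono[OF mfact_square_le])
  finally show ?thesis
    using mfact_pos[of "\<lambda>j. 2 * n j"] by simp
qed

lemma abs_laguerre_weight_le: "\<bar>laguerre_weight k n\<bar> \<le> 2 ^ mabs k"
proof -
  define R where "R = mfact (\<lambda>j. k j + n j) / sqrt (mfact (\<lambda>j. 2 * (k j + n j)))"
  have "\<bar>mbinom (\<lambda>j. real (k j) - 3 / 2) k\<bar> \<le> 1"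
    unfolding mbinom_eq_prod_beta_coeff abs_prod by (rule prod_le_1) (auto simp: abs_beta_coeff_le)
  moreover have "0 \<le> R"
    unfolding R_def by (intro divide_nonneg_nonneg real_sqrt_ge_zero less_imp_le mfact_pos)
  moreover have "R \<le> 1"
    unfolding R_def by (rule mfact_div_sqrt_mfact_double_le)
  moreover have "\<bar>laguerre_weight k n\<bar> = \<bar>mbinom (\<lambda>j. real (k j) - 3 / 2) k\<bar> * 2 ^ mabs k * R"
    unfolding laguerre_weight_def R_def by (simp add: abs_mult abs_divide less_imp_le[OF mfact_pos])
  ultimately have "\<bar>laguerre_weight k n\<bar> \<le> 1 * 2 ^ mabs k * 1"
    by (simp only:) (intro mult_mono mult_right_mono; simp)
  then show ?thesis
    by simp
qed

lemma abs_laguerre_scale_le: "\<bar>laguerre_scale n\<bar> \<le> 2 ^ mabs n"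
proof -
  have "pi powr (real CARD('d) / 4) \<ge> 1"
    using pi_gt3 by (intro ge_one_powr_ge_zero) auto
  then show ?thesis
    unfolding laguerre_scale_def by (simp add: abs_mult divide_le_eq)
qed

lemma abs_laguerre_fun1_le:
  assumes "t \<ge> 0"
  shows "\<bar>laguerre_fun1 q t\<bar> \<le> (1 + t) ^ q"
proof -
  have "\<bar>laguerre_poly q t\<bar> \<le> (\<Sum>i\<le>q. \<bar>(-1) ^ i * real (q choose i) / fact i * t ^ i\<bar>)"
    unfolding laguerre_poly_altdef by (rule sum_abs)
  also have "\<dots> \<le> (\<Sum>i\<le>q. real (q choose i) * t ^ i)"
  proof (rule sum_mono)
    fix i
    have "real (q choose i) / fact i \<le> real (q choose i)"
      using divide_left_mono[of 1 "fact i" "real (q choose i)"] by (simp add: fact_ge_1)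
    then have "real (q choose i) / fact i * t ^ i \<le> real (q choose i) * t ^ i"
      by (rule mult_right_mono) (simp add: assms)
    then show "\<bar>(-1) ^ i * real (q choose i) / fact i * t ^ i\<bar> \<le> real (q choose i) * t ^ i"
      using assms by (simp add: abs_mult)
  qed
  also have "\<dots> = (1 + t) ^ q"
    using binomial_ring[of t 1 q] by (simp add: add.commute)
  finally have "\<bar>laguerre_poly q t\<bar> \<le> (1 + t) ^ q" .
  moreover have "\<bar>exp (- t / 2)\<bar> \<le> 1"
    using assms by simp
  ultimately have "\<bar>laguerre_poly q t\<bar> * \<bar>exp (- t / 2)\<bar> \<le> (1 + t) ^ q * 1"
    by (rule mult_mono) (use assms in auto)
  then show ?thesis
    by (simp add: laguerre_fun1_def abs_mult)
qed

lemma abs_laguerre_fun_le: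
  assumes "x \<in> pos_orthant"
  shows "\<bar>laguerre_fun p x\<bar> \<le> (1 + (\<Sum>j\<in>UNIV. x $ j)) ^ mabs p"
proof -
  have x: "x $ j \<ge> 0" for j
    using assms by (simp add: pos_orthant_def less_imp_le)
  have "\<bar>laguerre_fun p x\<bar> = (\<Prod>j\<in>UNIV. \<bar>laguerre_fun1 (p j) (x $ j)\<bar>)"
    unfolding laguerre_fun_eq_prod by (simp add: abs_prod)
  also have "\<dots> \<le> (\<Prod>j\<in>UNIV. (1 + (\<Sum>j\<in>UNIV. x $ j)) ^ p j)"
  proof (intro prod_mono conjI abs_ge_zero order.trans[OF abs_laguerre_fun1_le[OF x]] power_mono)
    show "1 + x $ j \<le> 1 + (\<Sum>j\<in>UNIV. x $ j)" for j
      using x by (simp add: member_le_sum)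
  qed (use x in auto)
  also have "\<dots> = (1 + (\<Sum>j\<in>UNIV. x $ j)) ^ mabs p"
    by (simp add: power_mabs)
  finally show ?thesis .
qed

lemma hermite_fun_even_wmap:
  assumes "x \<in> pos_orthant"
  shows "hermite_fun (\<lambda>j. 2 * m j) (wmap x) =
    (\<Sum>p\<in>PiE UNIV (\<lambda>j. {..m j}). (\<Prod>j\<in>UNIV. hermite_laguerre_coeff (m j) (p j)) * laguerre_fun p x)"
proof -
  have "x $ j \<ge> 0" for j
    using assms by (simp add: pos_orthant_def less_imp_le)
  then have "hermite_fun (\<lambda>j. 2 * m j) (wmap x) =
      (\<Prod>j\<in>UNIV. \<Sum>q\<le>m j. hermite_laguerre_coeff (m j) q * laguerre_fun1 q (x $ j))"
    unfolding hermite_fun_eq_prod wmap_def by (simp add: hermite_fun1_even_sqrt)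
  also have "\<dots> = (\<Sum>p\<in>PiE UNIV (\<lambda>j. {..m j}). \<Prod>j\<in>UNIV. hermite_laguerre_coeff (m j) (p j) * laguerre_fun1 (p j) (x $ j))"
    by (rule prod_sum_PiE) auto
  finally show ?thesis
    by (simp add: laguerre_fun_eq_prod prod.distrib)
qed

text \<open>For \<open>c n = a\<^sub>2\<^sub>n(f)\<close> this is the sequence \<open>b\<close> of the theorem.\<close>
definition laguerre_transform :: "(('d::finite \<Rightarrow> nat) \<Rightarrow> complex) \<Rightarrow> ('d \<Rightarrow> nat) \<Rightarrow> complex" where
  "laguerre_transform c n = complex_of_real (laguerre_scale n) *
     (\<Sum>\<^sub>\<infinity>k. complex_of_real (laguerre_weight k n) * c (\<lambda>j. k j + n j))"

locale flat_decay =
  fixes c :: "('d::finite \<Rightarrow> nat) \<Rightarrow> complex" and C \<rho> \<epsilon> :: real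
  assumes eps_pos: "\<epsilon> > 0" and rho_pos: "\<rho> > 0"
    and norm_le: "\<And>n. norm (c n) \<le> C * flat_weight \<epsilon> \<rho> n"
begin

lemma C_nonneg: "C \<ge> 0"
proof -
  have "norm (c (\<lambda>_. 0)) \<le> C"
    using norm_le[of "\<lambda>_. 0"] by (simp add: flat_weight_def mabs_def mfact_def)
  then show ?thesis
    using norm_ge_zero[of "c (\<lambda>_. 0)"] by linarith
qed

lemma norm_shift_term_le:
  "norm (complex_of_real (laguerre_weight k p) * c (\<lambda>j. k j + p j))
     \<le> C * flat_weight \<epsilon> \<rho> p * flat_weight \<epsilon> (2 * \<rho>) k"
proof -
  have "norm (c (\<lambda>j. k j + p j)) \<le> C * flat_weight \<epsilon> \<rho> (\<lambda>j. k j + p j)"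
    by (rule norm_le)
  also have "\<dots> \<le> C * (flat_weight \<epsilon> \<rho> k * flat_weight \<epsilon> \<rho> p)"
    using eps_pos rho_pos by (intro mult_left_mono flat_weight_add_le C_nonneg) auto
  finally have c_le: "norm (c (\<lambda>j. k j + p j)) \<le> C * (flat_weight \<epsilon> \<rho> k * flat_weight \<epsilon> \<rho> p)" .
  have "norm (complex_of_real (laguerre_weight k p) * c (\<lambda>j. k j + p j))
      \<le> 2 ^ mabs k * (C * (flat_weight \<epsilon> \<rho> k * flat_weight \<epsilon> \<rho> p))"
    unfolding norm_mult norm_of_real by (intro mult_mono abs_laguerre_weight_le c_le) auto
  also have "\<dots> = C * flat_weight \<epsilon> \<rho> p * flat_weight \<epsilon> (2 * \<rho>) k"
    unfolding flat_weight_mult[of \<epsilon> 2 \<rho>] by (simp add: mult_ac)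
  finally show ?thesis .
qed

lemma summable_on_shift_terms:
  "(\<lambda>k. norm (complex_of_real (laguerre_weight k p) * c (\<lambda>j. k j + p j))) summable_on UNIV"
proof (rule summable_on_comparison_test)
  show "(\<lambda>k. C * flat_weight \<epsilon> \<rho> p * flat_weight \<epsilon> (2 * \<rho>) k) summable_on UNIV"
    using eps_pos rho_pos by (intro summable_on_cmult_right summable_on_flat_weight) auto
qed (use norm_shift_term_le in auto)

lemma norm_laguerre_transform_le:
  "norm (laguerre_transform c p) \<le> C * (\<Sum>\<^sub>\<infinity>k::'d \<Rightarrow> nat. flat_weight \<epsilon> (2 * \<rho>) k) * flat_weight \<epsilon> (2 * \<rho>) p"
proof -
  let ?t = "\<lambda>k. complex_of_real (laguerre_weight k p) * c (\<lambda>j. k j + p j)"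
  have summable_w: "flat_weight \<epsilon> (2 * \<rho>) summable_on (UNIV :: ('d \<Rightarrow> nat) set)"
    using eps_pos rho_pos by (intro summable_on_flat_weight) auto
  have "norm (\<Sum>\<^sub>\<infinity>k. ?t k) \<le> (\<Sum>\<^sub>\<infinity>k. norm (?t k))"
    by (rule norm_infsum_bound[OF summable_on_shift_terms])
  also have "\<dots> \<le> (\<Sum>\<^sub>\<infinity>k::'d \<Rightarrow> nat. C * flat_weight \<epsilon> \<rho> p * flat_weight \<epsilon> (2 * \<rho>) k)"
  proof (rule infsum_mono)
    show "(\<lambda>k. C * flat_weight \<epsilon> \<rho> p * flat_weight \<epsilon> (2 * \<rho>) k) summable_on (UNIV :: ('d \<Rightarrow> nat) set)"
      by (rule summable_on_cmult_right[OF summable_w])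
  qed (simp_all add: summable_on_shift_terms norm_shift_term_le)
  also have "\<dots> = C * flat_weight \<epsilon> \<rho> p * (\<Sum>\<^sub>\<infinity>k::'d \<Rightarrow> nat. flat_weight \<epsilon> (2 * \<rho>) k)"
    by (rule infsum_cmult_right[OF summable_w])
  finally have "norm (laguerre_transform c p)
      \<le> 2 ^ mabs p * (C * flat_weight \<epsilon> \<rho> p * (\<Sum>\<^sub>\<infinity>k::'d \<Rightarrow> nat. flat_weight \<epsilon> (2 * \<rho>) k))"
    unfolding laguerre_transform_def norm_mult norm_of_real by (intro mult_mono abs_laguerre_scale_le) auto
  then show ?thesis
    unfolding flat_weight_mult[of \<epsilon> 2 \<rho>] by (simp add: mult_ac)
qed

lemma laguerre_transform_in_ell_flat: "laguerre_transform c \<in> ell_flat (1 / (2 * \<epsilon>))"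
proof -
  have "1 / (2 * (1 / (2 * \<epsilon>))) = \<epsilon>"
    using eps_pos by simp
  moreover have "C * (\<Sum>\<^sub>\<infinity>k::'d \<Rightarrow> nat. flat_weight \<epsilon> (2 * \<rho>) k) \<ge> 0"
    using C_nonneg rho_pos by (intro mult_nonneg_nonneg infsum_nonneg flat_weight_nonneg) auto
  moreover have "2 * \<rho> > 0"
    using rho_pos by simp
  ultimately show ?thesis
    unfolding ell_flat_iff using norm_laguerre_transform_le by metis
qed

lemma laguerre_series:
  assumes x: "x \<in> pos_orthant"
    and sum: "((\<lambda>n. c n * complex_of_real (hermite_fun (\<lambda>j. 2 * n j) (wmap x))) has_sum y) UNIV"
  shows "(\<lambda>p. norm (laguerre_transform c p * complex_of_real (laguerre_fun p x))) summable_on UNIV"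
    and "((\<lambda>p. laguerre_transform c p * complex_of_real (laguerre_fun p x)) has_sum y) UNIV"
proof -
  define T where "T = 1 + (\<Sum>j\<in>UNIV. x $ j)"
  define L where "L p = complex_of_real (laguerre_fun p x)" for p :: "'d \<Rightarrow> nat"
  have "0 \<le> (\<Sum>j\<in>UNIV. x $ j)"
    using x by (intro sum_nonneg) (simp add: pos_orthant_def less_imp_le)
  then have T: "T \<ge> 0"
    by (simp add: T_def)
  have L_le: "norm (L p) \<le> T ^ mabs p" for p
    using abs_laguerre_fun_le[OF x] by (simp add: L_def T_def)
  have summable_w: "flat_weight \<epsilon> r summable_on (UNIV :: ('d \<Rightarrow> nat) set)" if "r \<ge> 0" for r
    using eps_pos that by (rule summable_on_flat_weight)
  define V where "V = (\<Sum>\<^sub>\<infinity>k::'d \<Rightarrow> nat. flat_weight \<epsilon> (2 * \<rho>) k)"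
  have V: "V \<ge> 0"
    unfolding V_def using rho_pos by (intro infsum_nonneg flat_weight_nonneg) auto
  have bound: "norm (laguerre_transform c p * L p) \<le> C * V * flat_weight \<epsilon> (T * (2 * \<rho>)) p" for p
  proof -
    have "0 \<le> C * V * flat_weight \<epsilon> (2 * \<rho>) p"
      using C_nonneg V rho_pos by (simp add: flat_weight_nonneg)
    then have "norm (laguerre_transform c p * L p) \<le> (C * V * flat_weight \<epsilon> (2 * \<rho>) p) * T ^ mabs p"
      unfolding norm_mult using norm_laguerre_transform_le[of p] L_le[of p]
      by (intro mult_mono) (simp_all add: V_def)
    then show ?thesis
      unfolding flat_weight_mult[of \<epsilon> T "2 * \<rho>"] by (simp add: mult_ac)
  qed
  have "(\<lambda>p::'d \<Rightarrow> nat. C * V * flat_weight \<epsilon> (T * (2 * \<rho>)) p) summable_on UNIV"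
    using T rho_pos by (intro summable_on_cmult_right summable_w) auto
  then show "(\<lambda>p. norm (laguerre_transform c p * L p)) summable_on UNIV"
    by (rule summable_on_comparison_test) (simp_all add: bound)
  define F where "F z = (case z of (p, k) \<Rightarrow>
      complex_of_real (laguerre_weight k p) * c (\<lambda>j. k j + p j) * (complex_of_real (laguerre_scale p) * L p))"
    for z :: "('d \<Rightarrow> nat) \<times> ('d \<Rightarrow> nat)"
  have F_le: "norm (F (p, k)) \<le> C * flat_weight \<epsilon> (T * (2 * \<rho>)) p * flat_weight \<epsilon> (2 * \<rho>) k" for p k
  proof -
    have "norm (F (p, k)) = norm (complex_of_real (laguerre_weight k p) * c (\<lambda>j. k j + p j))
        * (\<bar>laguerre_scale p\<bar> * norm (L p))"
      by (simp add: F_def norm_mult)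
    also have "\<dots> \<le> (C * flat_weight \<epsilon> \<rho> p * flat_weight \<epsilon> (2 * \<rho>) k) * (2 ^ mabs p * T ^ mabs p)"
      using C_nonneg rho_pos
      by (intro mult_mono norm_shift_term_le abs_laguerre_scale_le L_le mult_nonneg_nonneg flat_weight_nonneg) auto
    also have "\<dots> = C * flat_weight \<epsilon> (T * (2 * \<rho>)) p * flat_weight \<epsilon> (2 * \<rho>) k"
      unfolding flat_weight_mult[of \<epsilon> T "2 * \<rho>"] flat_weight_mult[of \<epsilon> 2 \<rho>] by (simp add: mult_ac)
    finally show ?thesis .
  qed
  have "(\<lambda>(p, k). C * flat_weight \<epsilon> (T * (2 * \<rho>)) p * flat_weight \<epsilon> (2 * \<rho>) k)
      summable_on (UNIV :: ('d \<Rightarrow> nat) set) \<times> (UNIV :: ('d \<Rightarrow> nat) set)"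
    using T rho_pos C_nonneg
    by (intro summable_on_product_nonneg summable_on_cmult_right summable_w flat_weight_nonneg
        mult_nonneg_nonneg) auto
  then have "(\<lambda>z. norm (F z)) summable_on UNIV \<times> UNIV"
    by (rule summable_on_comparison_test) (simp_all add: F_le split: prod.splits)
  then have summable_F: "F summable_on UNIV"
    by (simp add: abs_summable_summable)
  have "(\<Sum>p\<in>PiE UNIV (\<lambda>j. {..n j}). F (p, \<lambda>j. n j - p j)) =
      c n * complex_of_real (hermite_fun (\<lambda>j. 2 * n j) (wmap x))" for n
  proof -
    have "F (p, \<lambda>j. n j - p j) =
        c n * complex_of_real ((\<Prod>j\<in>UNIV. hermite_laguerre_coeff (n j) (p j)) * laguerre_fun p x)"
      if "p \<in> PiE UNIV (\<lambda>j. {..n j})" for p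
    proof -
      have n: "n j - p j + p j = n j" for j
        using that by (auto simp: PiE_iff)
      have "(\<Prod>j\<in>UNIV. hermite_laguerre_coeff (n j) (p j)) = laguerre_scale p * laguerre_weight (\<lambda>j. n j - p j) p"
        using prod_hermite_laguerre_coeff[of "\<lambda>j. n j - p j" p] by (simp add: n)
      then show ?thesis
        by (simp add: F_def L_def n mult_ac)
    qed
    then have "(\<Sum>p\<in>PiE UNIV (\<lambda>j. {..n j}). F (p, \<lambda>j. n j - p j)) =
        c n * complex_of_real (\<Sum>p\<in>PiE UNIV (\<lambda>j. {..n j}). (\<Prod>j\<in>UNIV. hermite_laguerre_coeff (n j) (p j)) * laguerre_fun p x)"
      by (simp add: sum_distrib_left)
    also have "\<dots> = c n * complex_of_real (hermite_fun (\<lambda>j. 2 * n j) (wmap x))"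
      by (simp only: hermite_fun_even_wmap[OF x])
    finally show ?thesis .
  qed
  with sum have "((\<lambda>n. \<Sum>p\<in>PiE UNIV (\<lambda>j. {..n j}). F (p, \<lambda>j. n j - p j)) has_sum y) UNIV"
    by simp
  moreover have "(\<Sum>\<^sub>\<infinity>k. F (p, k)) = laguerre_transform c p * L p" for p
    by (simp only: F_def case_prod_conv infsum_cmult_left') (simp add: laguerre_transform_def mult_ac)
  ultimately show "((\<lambda>p. laguerre_transform c p * L p) has_sum y) UNIV"
    using has_sum_multi_index_diagonals[OF summable_F] by simp
qed

end

lemma H_flat_even_expansion:
  assumes "\<sigma> > 0" and "f \<in> H_flat_even \<sigma>"
  obtains C \<rho> where "flat_decay (\<lambda>n. hermite_coeff f (\<lambda>j. 2 * n j)) C \<rho> (1 / \<sigma>)"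
    and "\<And>x. ((\<lambda>n. hermite_coeff f (\<lambda>j. 2 * n j) * complex_of_real (hermite_fun (\<lambda>j. 2 * n j) x))
                has_sum f x) UNIV"
proof -
  from assms(2) obtain a where "a \<in> ell_flat \<sigma>"
    and abs: "\<And>x. (\<lambda>n. norm (a n * complex_of_real (hermite_fun n x))) summable_on UNIV"
    and sum: "\<And>x. ((\<lambda>n. a n * complex_of_real (hermite_fun n x)) has_sum f x) UNIV"
    and even: "\<And>j x. f (\<chi> i. if i = j then - (x $ i) else x $ i) = f x"
    unfolding H_flat_even_def H_flat_def by blast
  then obtain C \<rho> where C: "C \<ge> 0" and \<rho>: "\<rho> > 0"
    and a_le: "\<And>n. norm (a n) \<le> C * flat_weight (1 / (2 * \<sigma>)) \<rho> n"
    unfolding ell_flat_iff by blast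
  have "(\<lambda>k. C * flat_weight (1 / (2 * \<sigma>)) \<rho> k) summable_on UNIV"
    using assms(1) \<rho> by (intro summable_on_cmult_right summable_on_flat_weight) auto
  then have "(\<lambda>k. norm (a k)) summable_on UNIV"
    by (rule summable_on_comparison_test) (simp_all add: a_le)
  then have coeff: "hermite_coeff f = a"
    by (intro ext hermite_coeff_eqI[OF sum abs])
  have "norm (a (\<lambda>j. 2 * n j)) \<le> C * flat_weight (1 / \<sigma>) (\<rho>\<^sup>2) n" for n
    using a_le[of "\<lambda>j. 2 * n j"] flat_weight_double_le[of "1 / (2 * \<sigma>)" \<rho> n] assms(1) \<rho> C
    by simp (meson mult_left_mono order_trans)
  with assms(1) \<rho> have "flat_decay (\<lambda>n. hermite_coeff f (\<lambda>j. 2 * n j)) C (\<rho>\<^sup>2) (1 / \<sigma>)"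
    by unfold_locales (auto simp: coeff)
  moreover have "((\<lambda>n. hermite_coeff f (\<lambda>j. 2 * n j) * complex_of_real (hermite_fun (\<lambda>j. 2 * n j) x))
      has_sum f x) UNIV" for x
    using has_sum_hermite_even[OF sum even] by (simp add: coeff)
  ultimately show ?thesis
    using that by blast
qed

theorem theorem6p5:
  fixes \<sigma> :: real and f :: "real ^ 'd::finite \<Rightarrow> complex"
  assumes "\<sigma> > 0" and "f \<in> H_flat_even \<sigma>"
  shows "(\<lambda>x. f (wmap x)) \<in> G_flat \<sigma> \<and>
    (\<exists>b \<in> ell_flat \<sigma>.
       (\<forall>n. (\<lambda>k. complex_of_real
                 (mbinom (\<lambda>j. real (k j) - 3 / 2) k * (-1) ^ mabs k * 2 ^ mabs k
                  * mfact (\<lambda>j. k j + n j) / sqrt (mfact (\<lambda>j. 2 * (k j + n j))))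
               * hermite_coeff f (\<lambda>j. 2 * (k j + n j))) summable_on UNIV \<and>
            b n = complex_of_real ((-1) ^ mabs n * 2 ^ mabs n / pi powr (real CARD('d) / 4)) *
              (\<Sum>\<^sub>\<infinity>k. complex_of_real
                 (mbinom (\<lambda>j. real (k j) - 3 / 2) k * (-1) ^ mabs k * 2 ^ mabs k
                  * mfact (\<lambda>j. k j + n j) / sqrt (mfact (\<lambda>j. 2 * (k j + n j))))
               * hermite_coeff f (\<lambda>j. 2 * (k j + n j)))) \<and>
       (\<forall>x\<in>pos_orthant.
          (\<lambda>n. norm (b n * complex_of_real (laguerre_fun n x))) summable_on UNIV \<and>
          ((\<lambda>n. b n * complex_of_real (laguerre_fun n x)) has_sum f (wmap x)) UNIV))"
proof -
  define c where "c n = hermite_coeff f (\<lambda>j. 2 * n j)" for n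
  obtain C \<rho> where decay: "flat_decay c C \<rho> (1 / \<sigma>)"
    and expansion: "\<And>x. ((\<lambda>n. c n * complex_of_real (hermite_fun (\<lambda>j. 2 * n j) x)) has_sum f x) UNIV"
    using H_flat_even_expansion[OF assms] unfolding c_def by blast
  interpret flat_decay c C \<rho> "1 / \<sigma>"
    by (rule decay)
  define b where "b = laguerre_transform c"
  have b_half: "b \<in> ell_flat (\<sigma> / 2)"
    using laguerre_transform_in_ell_flat by (simp add: b_def)
  then have "b \<in> ell_flat \<sigma>"
    using ell_flat_mono[of "\<sigma> / 2" \<sigma>] assms(1) by auto
  moreover have series: "\<forall>x\<in>pos_orthant.
      (\<lambda>n. norm (b n * complex_of_real (laguerre_fun n x))) summable_on UNIV \<and>
      ((\<lambda>n. b n * complex_of_real (laguerre_fun n x)) has_sum f (wmap x)) UNIV"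
    unfolding b_def using laguerre_series expansion by blast
  moreover have "(\<lambda>x. f (wmap x)) \<in> G_flat \<sigma>"
    unfolding G_flat_def using b_half series by blast
  moreover have "\<forall>n. (\<lambda>k. complex_of_real (laguerre_weight k n) * c (\<lambda>j. k j + n j)) summable_on UNIV \<and>
      b n = complex_of_real (laguerre_scale n) * (\<Sum>\<^sub>\<infinity>k. complex_of_real (laguerre_weight k n) * c (\<lambda>j. k j + n j))"
    using summable_on_shift_terms by (simp add: b_def laguerre_transform_def abs_summable_summable)
  ultimately show ?thesis
    unfolding laguerre_scale_def laguerre_weight_def c_def by blast
qed

end
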